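(* Let $w$ be a decreasing weight on $(0,\infty)$ and $1<q<\infty$. The following are equivalent: (i) $\Lambda^1(w)\subset\Gamma^{1,q}(w)$. (ii) The Hardy operator $Sf(t)=\frac1t\int_0^t f(s)\,ds$ is bounded from $L^1_{\rm dec}(w)$ to $L^{1,q}(w)$, i.e. there is $C$ with $\|Sf\|_{L^{1,q}(w)}\le C\int_0^\infty f(t)w(t)\,dt$ for all nonnegative decreasing $f$ on $(0,\infty)$. (iii) $w\in B_1$.
   Context: A weight is a nonnegative locally integrable measurable function on $(0,\infty)$; "decreasing" means nonincreasing; $W(t)=\int_0^t w$. For a measurable function $f$ on $\mathbb{R}^n$, $f^*$ is its decreasing rearrangement and $f^{**}(t)=\frac1t\int_0^t f^*(s)\,ds$. $\|f\|_{\Lambda^1(w)}=\int_0^\infty f^*(t)w(t)\,dt$ and $\|f\|_{\Gamma^{1,q}(w)}=\big(\int_0^\infty (f^{**}(t))^qW^{q-1}(t)w(t)\,dt\big)^{1/q}$; $X\subset Y$ means $\|f\|_Y\le C\|f\|_X$ for all $f$. $L^{1,q}(w)$ is the Lorentz space on $(0,\infty)$ with respect to the measure $w(t)\,dt$: $\|g\|_{L^{1,q}(w)}=\big(\int_0^\infty t^{q-1}(g^*_w(t))^q\,dt\big)^{1/q}$, with $g^*_w$ the decreasing rearrangement of $g$ with respect to $w(t)\,dt$. $w\in B_1$ means there is $C$ with $\int_r^\infty\frac{w(s)}{s}\,ds\le\frac Cr\int_0^r w(s)\,ds$ for all $r>0$. *)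

theory Defs
  imports "HOL-Analysis.Analysis"
begin

definition enn_powr :: "ennreal \<Rightarrow> real \<Rightarrow> ennreal" where
  "enn_powr x p = (if x = top then top else ennreal (enn2real x powr p))"

definition rearr :: "'a measure \<Rightarrow> ('a \<Rightarrow> ennreal) \<Rightarrow> real \<Rightarrow> ennreal" where
  "rearr M g t = Inf {s. emeasure M {x \<in> space M. g x > s} \<le> ennreal t}"

definition dec_rearr :: "('a::euclidean_space \<Rightarrow> real) \<Rightarrow> real \<Rightarrow> ennreal" where
  "dec_rearr f = rearr lebesgue (\<lambda>x. ennreal \<bar>f x\<bar>)"

definition max_rearr :: "('a::euclidean_space \<Rightarrow> real) \<Rightarrow> real \<Rightarrow> ennreal" where
  "max_rearr f t = ennreal (1 / t) * (\<integral>\<^sup>+ s \<in> {0<..<t}. dec_rearr f s \<partial>lborel)"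

definition Wfun :: "(real \<Rightarrow> real) \<Rightarrow> real \<Rightarrow> ennreal" where
  "Wfun w t = (\<integral>\<^sup>+ s \<in> {0<..<t}. ennreal (w s) \<partial>lborel)"

definition Lambda1_norm :: "(real \<Rightarrow> real) \<Rightarrow> ('a::euclidean_space \<Rightarrow> real) \<Rightarrow> ennreal" where
  "Lambda1_norm w f = (\<integral>\<^sup>+ t \<in> {0<..}. dec_rearr f t * ennreal (w t) \<partial>lborel)"

definition Gamma1q_norm :: "(real \<Rightarrow> real) \<Rightarrow> real \<Rightarrow> ('a::euclidean_space \<Rightarrow> real) \<Rightarrow> ennreal" where
  "Gamma1q_norm w q f = enn_powr
     (\<integral>\<^sup>+ t \<in> {0<..}. enn_powr (max_rearr f t) q * enn_powr (Wfun w t) (q - 1) * ennreal (w t) \<partial>lborel)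
     (1 / q)"

definition wmeasure :: "(real \<Rightarrow> real) \<Rightarrow> real measure" where
  "wmeasure w = density (restrict_space lborel {0<..}) (\<lambda>t. ennreal (w t))"

definition L1q_norm :: "(real \<Rightarrow> real) \<Rightarrow> real \<Rightarrow> (real \<Rightarrow> ennreal) \<Rightarrow> ennreal" where
  "L1q_norm w q g = enn_powr
     (\<integral>\<^sup>+ t \<in> {0<..}. ennreal (t powr (q - 1)) * enn_powr (rearr (wmeasure w) g t) q \<partial>lborel)
     (1 / q)"

definition hardy :: "(real \<Rightarrow> real) \<Rightarrow> real \<Rightarrow> ennreal" where
  "hardy f t = ennreal (1 / t) * (\<integral>\<^sup>+ s \<in> {0<..<t}. ennreal (f s) \<partial>lborel)"

definition weight :: "(real \<Rightarrow> real) \<Rightarrow> bool" where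
  "weight w \<longleftrightarrow> w \<in> borel_measurable lborel \<and> (\<forall>t>0. w t \<ge> 0)
     \<and> (\<forall>t>0. set_integrable lborel {0<..<t} w)"

definition decreasing_on_pos :: "(real \<Rightarrow> real) \<Rightarrow> bool" where
  "decreasing_on_pos f \<longleftrightarrow> (\<forall>s t. 0 < s \<and> s \<le> t \<longrightarrow> f t \<le> f s)"

definition B1 :: "(real \<Rightarrow> real) \<Rightarrow> bool" where
  "B1 w \<longleftrightarrow> (\<exists>C::real. \<forall>r>0.
     (\<integral>\<^sup>+ s \<in> {r<..}. ennreal (w s / s) \<partial>lborel) \<le> ennreal (C / r) * Wfun w r)"

end

theory Submission
  imports Defs
begin

text \<open>
  All three conditions are equivalent to the restricted Hardy inequality
  int (S chi_(0,r))^q W^(q-1) w <= C W(r)^q for all r > 0.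

  For decreasing g, layer-cake formulas on both sides, together with
  w(E)^q / 2^q <= int_E W^(q-1) w <= w(E)^q for initial segments E of (0, oo),
  show that the L^(1,q)(w) quasi-norm of g is comparable to (int g^q W^(q-1) w)^(1/q).
  Since f** = S f*, both (i) and (ii) therefore say that S maps the decreasing
  functions of L^1(w) boundedly into L^q(W^(q-1) w), and testing on indicators
  gives the restricted inequality. Conversely, writing a decreasing f as the
  integral over l of the indicators of its superlevel sets E_l, pairing
  (Sf)^(q-1) with each S chi_(E_l) and applying Young's inequality gives
  int (Sf)^q W^(q-1) w <= (q-1)/q int (Sf)^q W^(q-1) w + C (int f w)^q / q,
  which yields the full inequality once truncation has made the left side finite.

  Finally, B_1 implies the restricted inequality because S chi_(0,r) (t) = min 1 (r/t)
  and W(t) <= (t/r) W(r). Conversely, the restricted inequality at every a bounds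
  int_a^oo (W(t)/t)^(q-1) w(t)/t dt by C (W(a)/a)^q, and a layer-cake decomposition
  in the decreasing function W(t)/t turns these bounds into
  int_r^oo w(t)/t dt <= C q W(r)/r.
\<close>

lemma enn_powr_ennreal: "0 \<le> x \<Longrightarrow> enn_powr (ennreal x) p = ennreal (x powr p)"
  unfolding enn_powr_def by simp

lemma enn_powr_top [simp]: "enn_powr top p = top"
  unfolding enn_powr_def by simp

lemma enn_powr_0 [simp]: "enn_powr 0 p = 0"
  unfolding enn_powr_def by simp

lemma enn_powr_1_left [simp]: "enn_powr 1 p = 1"
  unfolding enn_powr_def by simp

lemma enn_powr_1_right [simp]: "enn_powr x 1 = x"
  by (cases x rule: ennreal_cases) (auto simp: enn_powr_ennreal)

lemma enn_powr_mono: assumes "0 < p" "x \<le> y" shows "enn_powr x p \<le> enn_powr y p"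
proof (cases y rule: ennreal_cases)
  case (real b)
  then obtain a where a: "x = ennreal a" "0 \<le> a" using assms(2)
    by (cases x rule: ennreal_cases) (auto simp: top_unique)
  then have "a \<le> b" using assms real by (simp add: ennreal_le_iff)
  then show ?thesis using a real assms by (simp add: enn_powr_ennreal powr_mono2)
qed simp

lemma enn_powr_strict_mono: assumes "0 < p" "x < y" shows "enn_powr x p < enn_powr y p"
proof -
  obtain a where a: "x = ennreal a" "0 \<le> a"
    using assms(2) by (cases x rule: ennreal_cases) auto
  show ?thesis
  proof (cases y rule: ennreal_cases)
    case (real b)
    then have "a < b" using assms a by (simp add: ennreal_less_iff)
    then show ?thesis using a real assms
      by (simp add: enn_powr_ennreal) (intro ennreal_lessI powr_less_mono2; auto)
  qed (use a in \<open>simp add: enn_powr_ennreal\<close>)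
qed

lemma enn_powr_eq_0_iff: "0 < p \<Longrightarrow> enn_powr x p = 0 \<longleftrightarrow> x = 0"
  using enn_powr_strict_mono[of p 0 x] by (auto simp: zero_less_iff_neq_zero)

lemma enn_powr_eq_top_iff: "enn_powr x p = top \<longleftrightarrow> x = top"
  by (cases x rule: ennreal_cases) (auto simp: enn_powr_ennreal)

lemma enn_powr_mult: assumes "0 < p" shows "enn_powr (x * y) p = enn_powr x p * enn_powr y p"
proof (cases "x = 0 \<or> y = 0")
  case False
  then show ?thesis
  proof (cases x rule: ennreal_cases; cases y rule: ennreal_cases)
    fix a b assume ab: "x = ennreal a" "0 \<le> a" "y = ennreal b" "0 \<le> b"
    then show ?thesis
      by (simp add: ennreal_mult[symmetric] enn_powr_ennreal powr_mult del: ennreal_mult)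
  qed (use False assms in \<open>auto simp: enn_powr_ennreal ennreal_mult_top ennreal_top_mult enn_powr_eq_0_iff\<close>)
qed auto

lemma enn_powr_powr: "0 < p \<Longrightarrow> 0 < r \<Longrightarrow> enn_powr (enn_powr x p) r = enn_powr x (p * r)"
  by (cases x rule: ennreal_cases) (auto simp: enn_powr_ennreal powr_powr)

lemma enn_powr_powr_inverse: "0 < p \<Longrightarrow> enn_powr (enn_powr x p) (1 / p) = x"
  using enn_powr_powr[of p "1 / p" x] by simp

lemma enn_powr_add: assumes "0 < p" "0 < r" shows "enn_powr x p * enn_powr x r = enn_powr x (p + r)"
proof (cases x rule: ennreal_cases)
  case (real a)
  then show ?thesis using assms
    by (cases "a = 0") (auto simp: enn_powr_ennreal ennreal_mult'[symmetric] powr_add)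
qed simp

lemma enn_powr_Sup:
  assumes p: "0 < p" and "A \<noteq> {}"
  shows "enn_powr (Sup A) p = (SUP a\<in>A. enn_powr a p)"
proof (rule antisym)
  show "(SUP a\<in>A. enn_powr a p) \<le> enn_powr (Sup A) p"
    by (intro SUP_least enn_powr_mono p Sup_upper)
  define B where "B = (SUP a\<in>A. enn_powr a p)"
  have "a \<le> enn_powr B (1 / p)" if "a \<in> A" for a
  proof -
    have "enn_powr a p \<le> B" unfolding B_def using that by (intro SUP_upper)
    then have "enn_powr (enn_powr a p) (1 / p) \<le> enn_powr B (1 / p)" using p by (intro enn_powr_mono) auto
    then show ?thesis using enn_powr_powr_inverse[OF p] by simp
  qed
  then have "enn_powr (Sup A) p \<le> enn_powr (enn_powr B (1 / p)) p"
    using p by (intro enn_powr_mono Sup_least) auto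
  also have "\<dots> = B" using enn_powr_powr[of "1 / p" p B] p by simp
  finally show "enn_powr (Sup A) p \<le> B" .
qed

lemma borel_measurable_enn_powr [measurable]:
  assumes [measurable]: "g \<in> borel_measurable M"
  shows "(\<lambda>x. enn_powr (g x) p) \<in> borel_measurable M"
  unfolding enn_powr_def by measurable

lemma enn_powr_inverse_le_multD:
  assumes "enn_powr X (1 / p) \<le> ennreal C * Y" "0 \<le> C" "0 < p"
  shows "X \<le> ennreal (C powr p) * enn_powr Y p"
proof -
  have "enn_powr (enn_powr X (1 / p)) p \<le> enn_powr (ennreal C * Y) p"
    using assms by (intro enn_powr_mono) auto
  also have "enn_powr (enn_powr X (1 / p)) p = X" using enn_powr_powr[of "1 / p" p X] assms by simp
  also have "enn_powr (ennreal C * Y) p = ennreal (C powr p) * enn_powr Y p"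
    using assms by (simp add: enn_powr_mult enn_powr_ennreal)
  finally show ?thesis .
qed

lemma enn_powr_inverse_le_multI:
  assumes "X \<le> ennreal C * enn_powr Y p" "0 \<le> C" "0 < p"
  shows "enn_powr X (1 / p) \<le> ennreal (C powr (1 / p)) * Y"
proof -
  have "enn_powr X (1 / p) \<le> enn_powr (ennreal C * enn_powr Y p) (1 / p)"
    using assms by (intro enn_powr_mono) auto
  also have "\<dots> = ennreal (C powr (1 / p)) * Y"
    using assms by (simp add: enn_powr_mult enn_powr_ennreal enn_powr_powr_inverse)
  finally show ?thesis .
qed

section \<open>Layer-cake formulas\<close>

lemma nn_integral_powr_Ioo:
  assumes p: "0 < p" and a: "0 \<le> a"
  shows "(\<integral>\<^sup>+ t\<in>{0<..<a}. ennreal (t powr (p - 1)) \<partial>lborel) = ennreal (a powr p / p)"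
proof -
  have "((\<lambda>x. x powr (p - 1)) has_integral (a powr (p - 1 + 1) / (p - 1 + 1))) {0..a}"
    using p a by (intro has_integral_powr_from_0) auto
  from nn_integral_has_integral_lebesgue[OF _ this]
  have "(\<integral>\<^sup>+ x. ennreal (indicator {0..a} x * x powr (p - 1)) \<partial>lborel) = ennreal (a powr p / p)"
    by simp
  moreover have "(\<integral>\<^sup>+ t\<in>{0<..<a}. ennreal (t powr (p - 1)) \<partial>lborel)
     = (\<integral>\<^sup>+ x. ennreal (indicator {0..a} x * x powr (p - 1)) \<partial>lborel)"
    apply (intro nn_integral_cong_AE)
    using AE_lborel_singleton[of a] AE_lborel_singleton[of 0]
    by eventually_elim (auto simp: indicator_def)
  ultimately show ?thesis by simp
qed

lemma nn_integral_powr_Ioi: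
  assumes p: "1 \<le> p"
  shows "(\<integral>\<^sup>+ t\<in>{0<..}. ennreal (t powr (p - 1)) \<partial>lborel) = top"
proof -
  have "of_nat n \<le> (\<integral>\<^sup>+ t\<in>{0<..}. ennreal (t powr (p - 1)) \<partial>lborel)" for n
  proof -
    have "of_nat n = (\<integral>\<^sup>+ t. indicator {1..<1 + real n} t \<partial>lborel)"
      by (simp add: ennreal_of_nat_eq_real_of_nat)
    also have "\<dots> \<le> (\<integral>\<^sup>+ t\<in>{0<..}. ennreal (t powr (p - 1)) \<partial>lborel)"
      using p by (intro nn_integral_mono) (auto simp: indicator_def intro: ge_one_powr_ge_zero)
    finally show ?thesis .
  qed
  then show ?thesis
    by (metis SUP_least ennreal_SUP_of_nat_eq_top top_unique)
qed

lemma enn_powr_layer_cake: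
  assumes p: "1 \<le> p"
  shows "enn_powr x p
    = (\<integral>\<^sup>+ m. ennreal (p * m powr (p - 1)) * indicator {m. 0 < m \<and> ennreal m < x} m \<partial>lborel)"
proof (cases x rule: ennreal_cases)
  case (real a)
  have "(\<integral>\<^sup>+ m. ennreal (p * m powr (p - 1)) * indicator {m. 0 < m \<and> ennreal m < x} m \<partial>lborel)
      = (\<integral>\<^sup>+ m. ennreal p * (ennreal (m powr (p - 1)) * indicator {0<..<a} m) \<partial>lborel)"
    using real p by (intro nn_integral_cong) (auto simp: indicator_def ennreal_mult ennreal_less_iff)
  also have "\<dots> = ennreal (a powr p)"
    using p real by (simp add: nn_integral_cmult nn_integral_powr_Ioo ennreal_mult[symmetric] del: ennreal_mult)
  finally show ?thesis using real by (simp add: enn_powr_ennreal)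
next
  case top
  have "(\<integral>\<^sup>+ m. ennreal (p * m powr (p - 1)) * indicator {m. 0 < m \<and> ennreal m < x} m \<partial>lborel)
      = (\<integral>\<^sup>+ m. ennreal p * (ennreal (m powr (p - 1)) * indicator {0<..} m) \<partial>lborel)"
    using top p by (intro nn_integral_cong) (auto simp: indicator_def ennreal_mult)
  also have "\<dots> = top"
    using p by (simp add: nn_integral_cmult nn_integral_powr_Ioi ennreal_mult_top)
  finally show ?thesis using top by simp
qed

lemma emeasure_lborel_less_ennreal: "emeasure lborel {l. 0 < l \<and> ennreal l < x} = x"
proof -
  have "(\<integral>\<^sup>+ m. indicator {m. 0 < m \<and> ennreal m < x} m \<partial>lborel)
    = (\<integral>\<^sup>+ m. ennreal (1 * m powr (1 - 1)) * indicator {m. 0 < m \<and> ennreal m < x} m \<partial>lborel)"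
    by (intro nn_integral_cong) (auto simp: indicator_def)
  also have "\<dots> = x"
    using enn_powr_layer_cake[of 1 x] by (simp only: enn_powr_1_right order_refl)
  finally show ?thesis by simp
qed

lemma nn_integral_powr_below:
  assumes p: "1 \<le> p"
  shows "(\<integral>\<^sup>+ t. ennreal (t powr (p - 1)) * indicator {t. 0 < t \<and> ennreal t < D} t \<partial>lborel)
     = ennreal (1 / p) * enn_powr D p"
proof -
  let ?I = "\<integral>\<^sup>+ t. ennreal (t powr (p - 1)) * indicator {t. 0 < t \<and> ennreal t < D} t \<partial>lborel"
  have "enn_powr D p = ennreal p * ?I"
    unfolding enn_powr_layer_cake[OF p] using p
    by (subst nn_integral_cmult[symmetric]) (auto intro!: nn_integral_cong simp: ennreal_mult mult.assoc)
  then have "ennreal (1 / p) * enn_powr D p = ennreal (1 / p) * ennreal p * ?I"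
    by (simp add: mult.assoc)
  also have "ennreal (1 / p) * ennreal p = 1"
    using p by (simp add: ennreal_mult[symmetric] del: ennreal_mult)
  finally show ?thesis by simp
qed

lemma nn_integral_mult_enn_powr_layer_cake:
  fixes h G :: "real \<Rightarrow> ennreal"
  assumes p: "1 \<le> p" and [measurable]: "h \<in> borel_measurable borel" "G \<in> borel_measurable borel"
  shows "(\<integral>\<^sup>+ s. h s * enn_powr (G s) p \<partial>lborel)
    = (\<integral>\<^sup>+ m. ennreal (p * m powr (p - 1)) * indicator {0<..} m *
          (\<integral>\<^sup>+ s. h s * indicator {s. ennreal m < G s} s \<partial>lborel) \<partial>lborel)"
proof -
  let ?F = "\<lambda>s m. h s * (ennreal (p * m powr (p - 1)) * indicator {m. 0 < m \<and> ennreal m < G s} m)"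
  have "(\<integral>\<^sup>+ s. h s * enn_powr (G s) p \<partial>lborel) = (\<integral>\<^sup>+ s. (\<integral>\<^sup>+ m. ?F s m \<partial>lborel) \<partial>lborel)"
    unfolding enn_powr_layer_cake[OF p] by (simp add: nn_integral_cmult)
  also have "\<dots> = (\<integral>\<^sup>+ m. (\<integral>\<^sup>+ s. ?F s m \<partial>lborel) \<partial>lborel)"
    by (rule lborel_pair.Fubini'[symmetric]) measurable
  also have "\<dots> = (\<integral>\<^sup>+ m. ennreal (p * m powr (p - 1)) * indicator {0<..} m *
          (\<integral>\<^sup>+ s. h s * indicator {s. ennreal m < G s} s \<partial>lborel) \<partial>lborel)"
    by (subst nn_integral_cmult[symmetric], measurable)
       (auto intro!: nn_integral_cong simp: indicator_def mult_ac)
  finally show ?thesis .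
qed

lemma borel_measurable_antimono_ennreal:
  fixes G :: "real \<Rightarrow> ennreal"
  assumes "antimono G"
  shows "G \<in> borel_measurable borel"
proof (rule borel_measurableI_greater)
  fix y :: ennreal
  have "is_interval {x. y < G x}"
    unfolding is_interval_1 using assms by (auto intro: less_le_trans dest: antimonoD)
  then show "{x \<in> space borel. y < G x} \<in> sets borel"
    using real_interval_borel_measurable by auto
qed

lemma nn_integral_powr_weight_dilation:
  fixes X :: "real \<Rightarrow> ennreal"
  assumes [measurable]: "X \<in> borel_measurable borel" and p: "0 < p" and c: "0 < c"
  shows "(\<integral>\<^sup>+ u. ennreal (p * u powr (p - 1)) * indicator {0<..} u * X u \<partial>lborel)
    = ennreal (c powr p) * (\<integral>\<^sup>+ m. ennreal (p * m powr (p - 1)) * indicator {0<..} m * X (c * m) \<partial>lborel)"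
proof -
  let ?Y = "\<lambda>u. ennreal (p * u powr (p - 1)) * indicator {0<..} u * X u"
  have "(\<integral>\<^sup>+ u. ?Y u \<partial>lborel) = ennreal c * (\<integral>\<^sup>+ m. ?Y (0 + c * m) \<partial>lborel)"
    using c by (subst nn_integral_real_affine[where c = c and t = 0]) auto
  also have "(\<integral>\<^sup>+ m. ?Y (0 + c * m) \<partial>lborel)
    = (\<integral>\<^sup>+ m. ennreal (c powr (p - 1)) * (ennreal (p * m powr (p - 1)) * indicator {0<..} m * X (c * m)) \<partial>lborel)"
  proof (intro nn_integral_cong)
    fix m :: real
    show "?Y (0 + c * m) = ennreal (c powr (p - 1)) * (ennreal (p * m powr (p - 1)) * indicator {0<..} m * X (c * m))"
    proof (cases "0 < m")
      case True
      then have "ennreal (p * (c * m) powr (p - 1)) = ennreal (c powr (p - 1)) * ennreal (p * m powr (p - 1))"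
        using p c by (simp add: powr_mult ennreal_mult[symmetric] mult_ac del: ennreal_mult)
      then show ?thesis using True c by (simp add: mult_ac)
    qed (use c in \<open>simp add: zero_less_mult_iff\<close>)
  qed
  also have "\<dots> = ennreal (c powr (p - 1)) * (\<integral>\<^sup>+ m. ennreal (p * m powr (p - 1)) * indicator {0<..} m * X (c * m) \<partial>lborel)"
    by (intro nn_integral_cmult) measurable
  finally show ?thesis
    using c by (simp add: mult.assoc[symmetric] ennreal_mult[symmetric] powr_mult_base del: ennreal_mult)
qed

lemma nn_integral_powr_neg:
  assumes p: "1 < p" and a: "0 < a" and ab: "a \<le> b"
  shows "(\<integral>\<^sup>+ x. ennreal ((p - 1) * x powr (- p)) * indicator {a<..b} x \<partial>lborel) = ennreal (a powr (1 - p) - b powr (1 - p))"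
proof -
  have "(\<integral>\<^sup>+ x. ennreal ((p - 1) * x powr (- p)) * indicator {a..b} x \<partial>lborel)
      = ennreal ((\<lambda>x. - (x powr (1 - p))) b - (\<lambda>x. - (x powr (1 - p))) a)"
  proof (rule nn_integral_FTC_Icc)
    show "(\<lambda>x. (p - 1) * x powr - p) \<in> borel_measurable borel" by measurable
    fix x assume x: "x \<in> {a..b}"
    then have x0: "0 < x" using a by auto
    have "((\<lambda>x. x powr (1 - p)) has_real_derivative (1 - p) * x powr (1 - p - 1)) (at x)"
      using x0 by (rule has_real_derivative_powr)
    then have "((\<lambda>x. - (x powr (1 - p))) has_real_derivative - ((1 - p) * x powr (1 - p - 1))) (at x)"
      by (rule DERIV_minus)
    then show "((\<lambda>x. - (x powr (1 - p))) has_real_derivative (p - 1) * x powr - p) (at x)"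
      by (simp add: algebra_simps)
    show "0 \<le> (p - 1) * x powr - p" using p by simp
  qed (use ab in auto)
  moreover have "(\<integral>\<^sup>+ x. ennreal ((p - 1) * x powr (- p)) * indicator {a<..b} x \<partial>lborel)
      = (\<integral>\<^sup>+ x. ennreal ((p - 1) * x powr (- p)) * indicator {a..b} x \<partial>lborel)"
    apply (intro nn_integral_cong_AE)
    using AE_lborel_singleton[of a]
    by eventually_elim (auto simp: indicator_def)
  ultimately show ?thesis by simp
qed

lemma Youngs_inequality_scaled:
  fixes x y s q :: real
  assumes q: "1 < q" and s: "0 < s" and x: "0 \<le> x" and y: "0 \<le> y"
  shows "x powr (q - 1) * y \<le> (q - 1) / q / s * x powr q + s powr (q - 1) / q * y powr q"
proof -
  define p where "p = q / (q - 1)"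
  define a where "a = (q - 1) / q"
  have p: "1 < p" "1 / p + 1 / q = 1" and ap: "(q - 1) * p = q" "a * p = 1" "a * q = q - 1"
    unfolding p_def a_def using q by (auto simp: field_simps)
  have "x powr (q - 1) * y = (x powr (q - 1) / s powr a) * (y * s powr a)"
    using s by simp
  also have "\<dots> \<le> (x powr (q - 1) / s powr a) powr p / p + (y * s powr a) powr q / q"
    using x y s by (intro Youngs_inequality p q) auto
  also have "(x powr (q - 1) / s powr a) powr p = x powr q / s"
    using x s by (simp add: powr_divide powr_powr ap)
  also have "(y * s powr a) powr q = s powr (q - 1) * y powr q"
    using y s by (simp add: powr_mult powr_powr ap)
  finally show ?thesis using q s by (simp add: p_def field_simps)
qed

lemma ennreal_Youngs_inequality_scaled:
  fixes a b :: ennreal and s q :: real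
  assumes q: "1 < q" and s: "0 < s"
  shows "enn_powr a (q - 1) * b
    \<le> ennreal ((q - 1) / q / s) * enn_powr a q + ennreal (s powr (q - 1) / q) * enn_powr b q"
proof (cases a rule: ennreal_cases; cases b rule: ennreal_cases)
  fix x y assume a: "a = ennreal x" "0 \<le> x" and b: "b = ennreal y" "0 \<le> y"
  have "enn_powr a (q - 1) * b = ennreal (x powr (q - 1) * y)"
    using a b by (simp add: enn_powr_ennreal ennreal_mult)
  also have "\<dots> \<le> ennreal ((q - 1) / q / s * x powr q + s powr (q - 1) / q * y powr q)"
    using Youngs_inequality_scaled[OF q s a(2) b(2)] by (rule ennreal_leI)
  also have "\<dots> = ennreal ((q - 1) / q / s * x powr q) + ennreal (s powr (q - 1) / q * y powr q)"
    by (intro ennreal_plus) (use q s in auto)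
  also have "\<dots> = ennreal ((q - 1) / q / s) * enn_powr a q + ennreal (s powr (q - 1) / q) * enn_powr b q"
    using a b q s by (simp add: enn_powr_ennreal ennreal_mult'[symmetric])
  finally show ?thesis .
qed (use q s in \<open>auto simp: ennreal_mult_top enn_powr_ennreal\<close>)

lemma nn_integral_Youngs_inequality_scaled:
  fixes a b \<mu> :: "'a \<Rightarrow> ennreal"
  assumes q: "1 < q" and s: "0 < s"
    and [measurable]: "a \<in> borel_measurable M" "b \<in> borel_measurable M" "\<mu> \<in> borel_measurable M"
  shows "(\<integral>\<^sup>+ x. \<mu> x * enn_powr (a x) (q - 1) * b x \<partial>M)
    \<le> ennreal ((q - 1) / q / s) * (\<integral>\<^sup>+ x. \<mu> x * enn_powr (a x) q \<partial>M)
      + ennreal (s powr (q - 1) / q) * (\<integral>\<^sup>+ x. \<mu> x * enn_powr (b x) q \<partial>M)"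
proof -
  have "(\<integral>\<^sup>+ x. \<mu> x * enn_powr (a x) (q - 1) * b x \<partial>M)
    \<le> (\<integral>\<^sup>+ x. ennreal ((q - 1) / q / s) * (\<mu> x * enn_powr (a x) q)
              + ennreal (s powr (q - 1) / q) * (\<mu> x * enn_powr (b x) q) \<partial>M)"
  proof (intro nn_integral_mono)
    fix x
    have "\<mu> x * enn_powr (a x) (q - 1) * b x \<le> \<mu> x * (ennreal ((q - 1) / q / s) * enn_powr (a x) q
        + ennreal (s powr (q - 1) / q) * enn_powr (b x) q)"
      unfolding mult.assoc by (intro mult_left_mono ennreal_Youngs_inequality_scaled q s) auto
    then show "\<mu> x * enn_powr (a x) (q - 1) * b x \<le> ennreal ((q - 1) / q / s) * (\<mu> x * enn_powr (a x) q)
              + ennreal (s powr (q - 1) / q) * (\<mu> x * enn_powr (b x) q)"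
      by (simp add: distrib_left mult_ac)
  qed
  also have "\<dots> = ennreal ((q - 1) / q / s) * (\<integral>\<^sup>+ x. \<mu> x * enn_powr (a x) q \<partial>M)
      + ennreal (s powr (q - 1) / q) * (\<integral>\<^sup>+ x. \<mu> x * enn_powr (b x) q \<partial>M)"
    by (simp add: nn_integral_add nn_integral_cmult)
  finally show ?thesis .
qed

lemma antimono_on_posD:
  fixes g :: "real \<Rightarrow> 'a::order"
  shows "antimono_on {0<..} g \<Longrightarrow> 0 < s \<Longrightarrow> s \<le> t \<Longrightarrow> g t \<le> g s"
  unfolding monotone_on_def by auto

definition initial_segment :: "real set \<Rightarrow> bool" where
  "initial_segment E \<longleftrightarrow> E \<subseteq> {0<..} \<and> (\<forall>x\<in>E. \<forall>y. 0 < y \<and> y \<le> x \<longrightarrow> y \<in> E)"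

lemma initial_segment_sets: "initial_segment E \<Longrightarrow> E \<in> sets borel"
  unfolding initial_segment_def
  by (intro real_interval_borel_measurable) (auto simp: is_interval_1 less_le_trans)

lemma initial_segment_cases:
  assumes E: "initial_segment E"
  obtains "E = {}" | "E = {0<..}" | a where "0 < a" "{0<..<a} \<subseteq> E" "E \<subseteq> {0<..a}"
proof -
  have Epos: "E \<subseteq> {0<..}" using E unfolding initial_segment_def by auto
  consider "E = {}" | "\<not> bdd_above E" | "E \<noteq> {}" "bdd_above E" by auto
  then show ?thesis
  proof cases
    case 2
    then have "E = {0<..}" using E unfolding initial_segment_def bdd_above_def
      by (auto simp: not_le) (meson less_imp_le)
    then show ?thesis using that by blast
  next
    case 3
    define a where "a = Sup E"
    obtain x where "x \<in> E" using 3 by auto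
    then have "0 < a" unfolding a_def using Epos 3 by (meson cSup_upper greaterThan_iff less_le_trans subsetD)
    moreover have "{0<..<a} \<subseteq> E"
    proof
      fix y assume y: "y \<in> {0<..<a}"
      then obtain z where "z \<in> E" "y < z" unfolding a_def using less_cSup_iff[OF 3] by auto
      then show "y \<in> E" using E y unfolding initial_segment_def by auto
    qed
    moreover have "E \<subseteq> {0<..a}" unfolding a_def using Epos 3 by (auto intro: cSup_upper)
    ultimately show ?thesis using that by blast
  qed (use that in blast)
qed

lemma antimono_on_indicator_initial_segment:
  "initial_segment E \<Longrightarrow> antimono_on {0<..} (indicator E :: real \<Rightarrow> ennreal)"
  unfolding initial_segment_def by (intro monotone_onI) (auto simp: indicator_def)

definition superlevel :: "(real \<Rightarrow> ennreal) \<Rightarrow> ennreal \<Rightarrow> real set" where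
  "superlevel g s = {x. 0 < x \<and> s < g x}"

lemma initial_segment_superlevel: "antimono_on {0<..} g \<Longrightarrow> initial_segment (superlevel g s)"
  unfolding initial_segment_def superlevel_def by (auto intro: less_le_trans dest: antimono_on_posD)

lemma superlevel_antimono: "s \<le> s' \<Longrightarrow> superlevel g s' \<subseteq> superlevel g s"
  unfolding superlevel_def by (auto intro: le_less_trans)

lemma borel_measurable_antimono_on_pos:
  fixes g :: "real \<Rightarrow> ennreal"
  assumes "antimono_on {0<..} g"
  shows "(\<lambda>x. g x * indicator {0<..} x) \<in> borel_measurable borel"
proof (rule borel_measurableI_greater)
  fix y :: ennreal
  have "{x \<in> space borel. y < g x * indicator {0<..} x} = superlevel g y"
    by (auto simp: indicator_def superlevel_def)
  then show "{x \<in> space borel. y < g x * indicator {0<..} x} \<in> sets borel"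
    using initial_segment_sets[OF initial_segment_superlevel[OF assms]] by simp
qed

definition truncation :: "nat \<Rightarrow> (real \<Rightarrow> ennreal) \<Rightarrow> real \<Rightarrow> ennreal" where
  "truncation n f s = min (f s) (of_nat n) * indicator {0<..<real n} s"

lemma truncation_le: "truncation n f s \<le> f s"
  unfolding truncation_def by (auto simp: indicator_def)

lemma truncation_le_indicator: "truncation n f s \<le> of_nat n * indicator {0<..<real n} s"
  unfolding truncation_def by (auto simp: indicator_def)

lemma truncation_mono: "truncation n f s \<le> truncation (Suc n) f s"
proof -
  have "min (f s) (of_nat n) \<le> min (f s) (of_nat (Suc n))" by (rule min.mono) auto
  moreover have "indicator {0<..<real n} s \<le> (indicator {0<..<real (Suc n)} s :: ennreal)"
    by (auto simp: indicator_def)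
  ultimately show ?thesis unfolding truncation_def by (rule mult_mono) auto
qed

lemma antimono_on_truncation:
  assumes "antimono_on {0<..} f"
  shows "antimono_on {0<..} (truncation n f)"
proof (rule monotone_onI)
  fix s t :: real assume "s \<in> {0<..}" "t \<in> {0<..}" "s \<le> t"
  then have "f t \<le> f s" using antimono_on_posD[OF assms] by auto
  then have "min (f t) (of_nat n) \<le> min (f s) (of_nat n)" by (rule min.mono) simp
  moreover have "indicator {0<..<real n} t \<le> (indicator {0<..<real n} s :: ennreal)"
    using \<open>s \<in> {0<..}\<close> \<open>s \<le> t\<close> by (auto simp: indicator_def)
  ultimately show "truncation n f t \<le> truncation n f s" unfolding truncation_def by (rule mult_mono) auto
qed

lemma borel_measurable_truncation:
  assumes "antimono_on {0<..} f"
  shows "truncation n f \<in> borel_measurable borel"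
proof -
  have [measurable]: "(\<lambda>u. f u * indicator {0<..} u) \<in> borel_measurable borel"
    using borel_measurable_antimono_on_pos[OF assms] .
  have "truncation n f = (\<lambda>s. min (f s * indicator {0<..} s) (of_nat n) * indicator {0<..<real n} s)"
    unfolding truncation_def by (auto simp: indicator_def fun_eq_iff)
  then show ?thesis by simp
qed

lemma SUP_truncation:
  assumes "0 < u"
  shows "(SUP n. truncation n f u) = f u"
  unfolding truncation_def
proof (rule antisym)
  show "(SUP n::nat. min (f u) (of_nat n) * indicator {0<..<real n} u) \<le> f u"
    by (intro SUP_least) (auto simp: indicator_def)
  obtain n\<^sub>0 :: nat where n\<^sub>0: "u < real n\<^sub>0" using reals_Archimedean2 by auto
  have "(SUP n. of_nat n :: ennreal) \<le> (SUP n. of_nat (n + n\<^sub>0))"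
  proof (intro SUP_least)
    fix n show "of_nat n \<le> (SUP m. of_nat (m + n\<^sub>0) :: ennreal)" by (rule SUP_upper2[of n]) auto
  qed
  then have unbounded: "(SUP n. of_nat (n + n\<^sub>0) :: ennreal) = top"
    by (simp add: ennreal_SUP_of_nat_eq_top top_unique)
  have "f u = min (f u) (SUP n. of_nat (n + n\<^sub>0))"
    unfolding unbounded by simp
  also have "\<dots> = (SUP n. min (f u) (of_nat (n + n\<^sub>0)))"
    using inf_SUP[of "f u" "\<lambda>n. of_nat (n + n\<^sub>0)" UNIV] by (simp only: inf_min)
  also have "\<dots> \<le> (SUP n::nat. min (f u) (of_nat n) * indicator {0<..<real n} u)"
  proof (intro SUP_mono bexI)
    fix n
    show "min (f u) (of_nat (n + n\<^sub>0)) \<le> min (f u) (of_nat (n + n\<^sub>0)) * indicator {0<..<real (n + n\<^sub>0)} u"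
      using n\<^sub>0 assms by (simp add: indicator_def)
  qed simp
  finally show "f u \<le> (SUP n::nat. min (f u) (of_nat n) * indicator {0<..<real n} u)" .
qed

section \<open>The Hardy averaging operator\<close>

definition hardy_ennreal :: "(real \<Rightarrow> ennreal) \<Rightarrow> real \<Rightarrow> ennreal" where
  "hardy_ennreal g t = ennreal (1 / t) * (\<integral>\<^sup>+ s\<in>{0<..<t}. g s \<partial>lborel)"

lemma hardy_eq: "hardy f = hardy_ennreal (\<lambda>s. ennreal (f s))"
  unfolding hardy_def hardy_ennreal_def by (rule ext) simp

lemma hardy_ennreal_cong_AE:
  "AE s in lborel. 0 < s \<longrightarrow> g s = g' s \<Longrightarrow> hardy_ennreal g t = hardy_ennreal g' t"
  unfolding hardy_ennreal_def
  by (intro arg_cong2[where f = "(*)"] refl nn_integral_cong_AE) (auto simp: indicator_def)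

lemma hardy_ennreal_cong: "(\<And>s. 0 < s \<Longrightarrow> g s = g' s) \<Longrightarrow> hardy_ennreal g t = hardy_ennreal g' t"
  by (intro hardy_ennreal_cong_AE) auto

lemma hardy_ennreal_mono: "(\<And>s. 0 < s \<Longrightarrow> g s \<le> g' s) \<Longrightarrow> hardy_ennreal g t \<le> hardy_ennreal g' t"
  unfolding hardy_ennreal_def by (intro mult_left_mono nn_integral_mono) (auto simp: indicator_def)

lemma hardy_ennreal_nonpos: "t \<le> 0 \<Longrightarrow> hardy_ennreal g t = 0"
  unfolding hardy_ennreal_def by simp

lemma hardy_ennreal_indicator:
  assumes "0 < t" "0 \<le> r"
  shows "hardy_ennreal (indicator {0<..<r}) t = ennreal (min t r / t)"
proof -
  have "(\<lambda>s. indicator {0<..<r} s * indicator {0<..<t} s :: ennreal) = indicator {0<..<min t r}"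
    by (auto simp: indicator_def fun_eq_iff)
  then show ?thesis
    unfolding hardy_ennreal_def using assms by (simp add: ennreal_mult'[symmetric] divide_simps)
qed

lemma hardy_ennreal_cmult:
  assumes [measurable]: "g \<in> borel_measurable borel"
  shows "hardy_ennreal (\<lambda>s. c * g s) t = c * hardy_ennreal g t"
proof -
  have "(\<integral>\<^sup>+ s\<in>{0<..<t}. c * g s \<partial>lborel) = c * (\<integral>\<^sup>+ s\<in>{0<..<t}. g s \<partial>lborel)"
    by (subst nn_integral_cmult[symmetric]) (auto simp: mult.assoc)
  then show ?thesis unfolding hardy_ennreal_def by (simp add: mult_ac)
qed

lemma hardy_ennreal_dilation:
  assumes [measurable]: "(\<lambda>x. g x * indicator {0<..} x) \<in> borel_measurable borel" and t: "0 < t"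
  shows "hardy_ennreal g t = (\<integral>\<^sup>+ u\<in>{0<..<1}. g (t * u) \<partial>lborel)"
proof -
  let ?G = "\<lambda>s. (g s * indicator {0<..} s) * indicator {..<t} s"
  have "(\<integral>\<^sup>+ s\<in>{0<..<t}. g s \<partial>lborel) = (\<integral>\<^sup>+ s. ?G s \<partial>lborel)"
    by (intro nn_integral_cong) (auto simp: indicator_def)
  also have "\<dots> = ennreal t * (\<integral>\<^sup>+ u. ?G (0 + t * u) \<partial>lborel)"
    using t by (subst nn_integral_real_affine[where c = t and t = 0]) auto
  also have "(\<integral>\<^sup>+ u. ?G (0 + t * u) \<partial>lborel) = (\<integral>\<^sup>+ u\<in>{0<..<1}. g (t * u) \<partial>lborel)"
    using t by (intro nn_integral_cong) (auto simp: indicator_def zero_less_mult_iff)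
  finally show ?thesis
    unfolding hardy_ennreal_def using t
    by (simp add: mult.assoc[symmetric] ennreal_mult'[symmetric])
qed

lemma hardy_ennreal_antimono:
  assumes g: "antimono_on {0<..} g"
  shows "antimono_on {0<..} (hardy_ennreal g)"
proof (rule monotone_onI)
  fix s t :: real assume st: "s \<in> {0<..}" "t \<in> {0<..}" "s \<le> t"
  have "(\<integral>\<^sup>+ u\<in>{0<..<1}. g (t * u) \<partial>lborel) \<le> (\<integral>\<^sup>+ u\<in>{0<..<1}. g (s * u) \<partial>lborel)"
    using st by (intro nn_integral_mono) (auto simp: indicator_def intro!: antimono_on_posD[OF g])
  then show "hardy_ennreal g t \<le> hardy_ennreal g s"
    using st by (simp add: hardy_ennreal_dilation[OF borel_measurable_antimono_on_pos[OF g]])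
qed

lemma borel_measurable_hardy_ennreal:
  assumes "antimono_on {0<..} g"
  shows "hardy_ennreal g \<in> borel_measurable borel"
proof -
  have "hardy_ennreal g = (\<lambda>s. hardy_ennreal g s * indicator {0<..} s)"
    by (auto simp: fun_eq_iff indicator_def hardy_ennreal_nonpos)
  then show ?thesis
    using borel_measurable_antimono_on_pos[OF hardy_ennreal_antimono[OF assms]] by simp
qed

lemma hardy_ennreal_SUP:
  assumes inc: "\<And>n s. F n s \<le> F (Suc n) s" and [measurable]: "\<And>n. F n \<in> borel_measurable borel"
  shows "hardy_ennreal (\<lambda>s. SUP n. F n s) t = (SUP n. hardy_ennreal (F n) t)"
proof -
  have "(\<integral>\<^sup>+ s\<in>{0<..<t}. (SUP n. F n s) \<partial>lborel) = (\<integral>\<^sup>+ s. (SUP n. F n s * indicator {0<..<t} s) \<partial>lborel)"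
    by (simp add: SUP_mult_right_ennreal)
  also have "\<dots> = (SUP n. \<integral>\<^sup>+ s\<in>{0<..<t}. F n s \<partial>lborel)"
    using inc by (intro nn_integral_monotone_convergence_SUP)
      (auto simp: incseq_Suc_iff le_fun_def intro!: mult_right_mono)
  finally show ?thesis unfolding hardy_ennreal_def by (simp add: SUP_mult_left_ennreal)
qed

lemma hardy_ennreal_superlevel_eq:
  "hardy_ennreal (indicator (superlevel f (ennreal l))) s = ennreal (1 / s) *
    (\<integral>\<^sup>+ u. (if 0 < u \<and> ennreal l < f u * indicator {0<..} u then 1 else 0) *
      (if 0 < u \<and> u < s then 1 else 0) \<partial>lborel)"
  unfolding hardy_ennreal_def superlevel_def
  by (intro arg_cong2[where f = "(*)"] refl nn_integral_cong) (auto simp: indicator_def)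

lemma measurable_hardy_ennreal_superlevel:
  assumes "antimono_on {0<..} f"
  shows "(\<lambda>(s, l). hardy_ennreal (indicator (superlevel f (ennreal l))) s) \<in> borel_measurable (lborel \<Otimes>\<^sub>M lborel)"
proof -
  have [measurable]: "(\<lambda>u. f u * indicator {0<..} u) \<in> borel_measurable borel"
    using borel_measurable_antimono_on_pos[OF assms] .
  show ?thesis unfolding hardy_ennreal_superlevel_eq by measurable
qed

lemma hardy_ennreal_layer_cake:
  assumes f: "antimono_on {0<..} f"
  shows "hardy_ennreal f s
    = (\<integral>\<^sup>+ l. indicator {0<..} l * hardy_ennreal (indicator (superlevel f (ennreal l))) s \<partial>lborel)"
proof -
  have [measurable]: "(\<lambda>u. f u * indicator {0<..} u) \<in> borel_measurable borel"
    using borel_measurable_antimono_on_pos[OF f] .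
  let ?F = "\<lambda>u l. (if 0 < l \<and> ennreal l < f u * indicator {0<..} u then 1 else 0) *
    (if 0 < u \<and> u < s then 1 else 0) :: ennreal"
  have "(\<integral>\<^sup>+ u\<in>{0<..<s}. f u \<partial>lborel) = (\<integral>\<^sup>+ u. (\<integral>\<^sup>+ l. ?F u l \<partial>lborel) \<partial>lborel)"
  proof (intro nn_integral_cong)
    fix u
    have "f u * indicator {0<..<s} u = (f u * indicator {0<..} u) * (if 0 < u \<and> u < s then 1 else 0)"
      by (auto simp: indicator_def)
    also have "\<dots> = emeasure lborel {l. 0 < l \<and> ennreal l < f u * indicator {0<..} u} * (if 0 < u \<and> u < s then 1 else 0)"
      by (simp only: emeasure_lborel_less_ennreal)
    also have "\<dots> = (\<integral>\<^sup>+ l. indicator {l. 0 < l \<and> ennreal l < f u * indicator {0<..} u} l * (if 0 < u \<and> u < s then 1 else 0) \<partial>lborel)"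
      by (subst nn_integral_multc) auto
    also have "\<dots> = (\<integral>\<^sup>+ l. ?F u l \<partial>lborel)"
      by (intro nn_integral_cong) (simp add: indicator_def)
    finally show "f u * indicator {0<..<s} u = (\<integral>\<^sup>+ l. ?F u l \<partial>lborel)" .
  qed
  also have "\<dots> = (\<integral>\<^sup>+ l. (\<integral>\<^sup>+ u. ?F u l \<partial>lborel) \<partial>lborel)"
    by (rule lborel_pair.Fubini') measurable
  finally have "hardy_ennreal f s = (\<integral>\<^sup>+ l. ennreal (1 / s) * (\<integral>\<^sup>+ u. ?F u l \<partial>lborel) \<partial>lborel)"
    unfolding hardy_ennreal_def by (subst nn_integral_cmult) measurable
  also have "\<dots> = (\<integral>\<^sup>+ l. indicator {0<..} l * hardy_ennreal (indicator (superlevel f (ennreal l))) s \<partial>lborel)"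
    unfolding hardy_ennreal_superlevel_eq
    by (intro nn_integral_cong) (auto simp: indicator_def intro!: arg_cong2[where f = "(*)"] nn_integral_cong)
  finally show ?thesis .
qed

section \<open>Decreasing rearrangements\<close>

lemma rearr_antimono: "antimono (rearr M g)"
  unfolding rearr_def by (intro antimonoI Inf_superset_mono) (auto intro: order_trans ennreal_leI)

lemma borel_measurable_rearr [measurable]: "rearr M g \<in> borel_measurable borel"
  by (intro borel_measurable_antimono_ennreal rearr_antimono)

lemma antimono_on_rearr: "antimono_on {0<..} (rearr M g)"
  by (rule monotone_onI) (simp add: antimonoD[OF rearr_antimono])

lemma exists_borel_set_with_measure:
  assumes r: "0 < r"
  shows "\<exists>B::'a::euclidean_space set. B \<in> sets borel \<and> emeasure lebesgue B = ennreal r"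
proof -
  define c where "c = r powr (1 / real DIM('a))"
  have c0: "0 < c" unfolding c_def using r by simp
  have cD: "c ^ DIM('a) = r"
  proof -
    have "c ^ DIM('a) = c powr real DIM('a)" using c0 by (simp add: powr_realpow)
    also have "\<dots> = r" unfolding c_def using r by (simp add: powr_powr)
    finally show ?thesis .
  qed
  have One: "b \<in> Basis \<Longrightarrow> One \<bullet> b = (1::real)" for b :: 'a by simp
  have "emeasure lborel (box 0 (c *\<^sub>R One) :: 'a set) = ennreal (\<Prod>b\<in>(Basis::'a set). (c *\<^sub>R One - 0) \<bullet> b)"
    using c0 by (subst emeasure_lborel_box) (auto simp: One)
  also have "(\<Prod>b\<in>(Basis::'a set). (c *\<^sub>R One - 0) \<bullet> b) = c ^ DIM('a)" by (simp add: One)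
  finally have "emeasure lborel (box 0 (c *\<^sub>R One) :: 'a set) = ennreal r" using cD by simp
  then show ?thesis by (intro exI[of _ "box 0 (c *\<^sub>R One)"]) auto
qed

lemma dec_rearr_indicator:
  fixes B :: "'a::euclidean_space set"
  assumes B: "B \<in> sets borel" "emeasure lebesgue B = ennreal r" and r: "0 < r" and t: "0 < t"
  shows "dec_rearr (indicator B :: 'a \<Rightarrow> real) t = indicator {0<..<r} t"
proof -
  have lev: "{x \<in> space lebesgue. s < ennreal \<bar>indicator B x :: real\<bar>} = (if s < 1 then B else {})" for s :: ennreal
    by (auto simp: indicator_def)
  have S: "{s. emeasure lebesgue {x \<in> space lebesgue. s < ennreal \<bar>indicator B x :: real\<bar>} \<le> ennreal t}
      = (if t < r then {s. 1 \<le> s} else UNIV)"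
    unfolding lev using B r t by (auto simp: ennreal_le_iff not_less split: if_splits)
  show ?thesis
    unfolding dec_rearr_def rearr_def S using t
    by (cases "t < r") (auto simp: indicator_def Inf_atLeast[unfolded atLeast_def] bot_ennreal)
qed

section \<open>Decreasing weights and their primitives\<close>

locale decreasing_weight =
  fixes w :: "real \<Rightarrow> real"
  assumes weight: "weight w" and decreasing: "decreasing_on_pos w"
begin

lemma w_nonneg: "0 < t \<Longrightarrow> 0 \<le> w t"
  using weight unfolding weight_def by auto

lemma borel_measurable_w [measurable]: "w \<in> borel_measurable borel"
  using weight unfolding weight_def by auto

lemma w_antimono: "0 < s \<Longrightarrow> s \<le> t \<Longrightarrow> w t \<le> w s"
  using decreasing unfolding decreasing_on_pos_def by auto

lemma Wfun_finite: "Wfun w t < top"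
proof (cases "t > 0")
  case True
  then have "integrable lborel (\<lambda>x. indicator {0<..<t} x *\<^sub>R w x)"
    using weight unfolding weight_def set_integrable_def by auto
  then have "(\<integral>\<^sup>+ x. ennreal (norm (indicator {0<..<t} x *\<^sub>R w x)) \<partial>lborel) < top"
    by (simp add: integrable_iff_bounded)
  moreover have "(\<integral>\<^sup>+ x. ennreal (norm (indicator {0<..<t} x *\<^sub>R w x)) \<partial>lborel) = Wfun w t"
    unfolding Wfun_def by (intro nn_integral_cong) (auto simp: indicator_def w_nonneg)
  ultimately show ?thesis by simp
qed (simp add: Wfun_def)

definition W :: "real \<Rightarrow> real" where "W t = enn2real (Wfun w t)"

lemma Wfun_eq_W: "Wfun w t = ennreal (W t)"
  unfolding W_def using Wfun_finite[of t] by simp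

lemma W_nonneg: "0 \<le> W t"
  unfolding W_def by simp

lemma W_nonpos: "t \<le> 0 \<Longrightarrow> W t = 0"
  unfolding W_def Wfun_def by simp

lemma enn_powr_Wfun: "enn_powr (Wfun w s) p = ennreal (W s powr p)"
  by (simp add: Wfun_eq_W enn_powr_ennreal W_nonneg)

lemma Wfun_mono: "s \<le> t \<Longrightarrow> Wfun w s \<le> Wfun w t"
  unfolding Wfun_def by (intro nn_integral_mono) (auto simp: indicator_def)

lemma W_mono: "s \<le> t \<Longrightarrow> W s \<le> W t"
  using Wfun_mono[of s t] W_nonneg[of t] by (simp add: Wfun_eq_W ennreal_le_iff)

lemma borel_measurable_W [measurable]: "W \<in> borel_measurable borel"
  by (rule borel_measurable_mono) (auto intro: monoI W_mono)

lemma borel_measurable_Wfun [measurable]: "Wfun w \<in> borel_measurable borel"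
  unfolding Wfun_eq_W[abs_def] by measurable

lemma W_diff:
  assumes "0 \<le> a" "a \<le> b"
  shows "ennreal (W b - W a) = (\<integral>\<^sup>+ s\<in>{a<..<b}. ennreal (w s) \<partial>lborel)"
proof -
  let ?I = "\<integral>\<^sup>+ s\<in>{a<..<b}. ennreal (w s) \<partial>lborel"
  have "Wfun w b = (\<integral>\<^sup>+ s. ennreal (w s) * indicator {0<..<a} s + ennreal (w s) * indicator {a<..<b} s \<partial>lborel)"
    unfolding Wfun_def
    apply (intro nn_integral_cong_AE)
    using AE_lborel_singleton[of a]
    apply eventually_elim
    using assms by (auto simp: indicator_def)
  also have "\<dots> = Wfun w a + ?I"
    unfolding Wfun_def by (subst nn_integral_add) auto
  finally have "?I = ennreal (W b) - ennreal (W a)"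
    by (simp add: Wfun_eq_W ennreal_add_diff_cancel_left)
  then show ?thesis using W_nonneg[of a] by (simp add: ennreal_minus)
qed

lemma W_diff_le:
  assumes "0 < a" "a \<le> b"
  shows "W b - W a \<le> (b - a) * w a"
proof -
  have "(\<integral>\<^sup>+ s\<in>{a<..<b}. ennreal (w s) \<partial>lborel) \<le> (\<integral>\<^sup>+ s. ennreal (w a) * indicator {a<..<b} s \<partial>lborel)"
    using assms by (intro nn_integral_mono) (auto simp: indicator_def intro!: ennreal_leI w_antimono)
  also have "\<dots> = ennreal (w a) * ennreal (b - a)"
    using assms by (subst nn_integral_cmult_indicator) auto
  also have "\<dots> = ennreal ((b - a) * w a)"
    using assms w_nonneg[of a] by (simp add: ennreal_mult' mult.commute)
  finally have "ennreal (W b - W a) \<le> ennreal ((b - a) * w a)"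
    using W_diff[of a b] assms by simp
  then show ?thesis using assms w_nonneg[of a] by (simp add: ennreal_le_iff)
qed

lemma W_ge: assumes "0 < t" shows "t * w t \<le> W t"
proof -
  have "ennreal (t * w t) = ennreal (w t) * emeasure lborel {0<..<t}"
    using assms w_nonneg[of t] by (simp add: ennreal_mult' mult.commute)
  also have "\<dots> = (\<integral>\<^sup>+ s. ennreal (w t) * indicator {0<..<t} s \<partial>lborel)"
    by (subst nn_integral_cmult_indicator) auto
  also have "\<dots> \<le> Wfun w t" unfolding Wfun_def
    by (intro nn_integral_mono) (auto simp: indicator_def intro!: ennreal_leI w_antimono)
  finally show ?thesis by (simp add: Wfun_eq_W W_nonneg ennreal_le_iff)
qed

lemma W_concave: assumes "0 < r" "r \<le> t" shows "r * W t \<le> t * W r"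
proof -
  have "W t - W r \<le> (t - r) * w r" using W_diff_le assms by auto
  moreover have "r * w r \<le> W r" using W_ge assms by auto
  ultimately have "r * (W t - W r) \<le> (t - r) * W r"
    by (smt (verit) assms mult_left_mono mult.commute mult.left_commute)
  then show ?thesis by (simp add: algebra_simps)
qed

lemma W_lipschitz: assumes a: "0 < a" shows "lipschitz_on (w a) {a..} W"
proof (rule lipschitz_onI)
  have le: "\<bar>W y - W x\<bar> \<le> w a * \<bar>y - x\<bar>" if "x \<in> {a..}" "y \<in> {a..}" "x \<le> y" for x y
  proof -
    have "W y - W x \<le> (y - x) * w x" using W_diff_le that a by auto
    also have "\<dots> \<le> (y - x) * w a" using that a by (intro mult_left_mono w_antimono) auto
    finally show ?thesis using W_mono[OF \<open>x \<le> y\<close>] that by (simp add: mult.commute)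
  qed
  fix x y assume "x \<in> {a..}" "y \<in> {a..}"
  then show "dist (W x) (W y) \<le> w a * dist x y"
    using le[of x y] le[of y x] by (cases "x \<le> y") (auto simp: dist_real_def abs_minus_commute)
qed (use w_nonneg a in auto)

lemma isCont_W: assumes "0 < x" shows "isCont W x"
proof -
  have "continuous_on {x / 2<..} W"
    using assms by (intro lipschitz_on_continuous_on[OF lipschitz_on_subset[OF W_lipschitz[of "x / 2"]]]) auto
  then show ?thesis using assms by (simp add: continuous_on_eq_continuous_at)
qed

definition wmass :: "real set \<Rightarrow> ennreal" where
  "wmass E = (\<integral>\<^sup>+ s\<in>E. ennreal (w s) \<partial>lborel)"

lemma Wfun_eq_wmass: "Wfun w t = wmass {0<..<t}"
  unfolding Wfun_def wmass_def ..

lemma wmass_mono: "A \<subseteq> B \<Longrightarrow> wmass A \<le> wmass B"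
  unfolding wmass_def by (intro nn_integral_mono) (auto simp: indicator_def)

lemma wmass_eq_Wfun:
  assumes "{0<..<a} \<subseteq> E" "E \<subseteq> {0<..a}"
  shows "wmass E = Wfun w a"
proof (rule antisym)
  have "wmass {0<..a} = Wfun w a"
    unfolding Wfun_eq_wmass wmass_def
    apply (intro nn_integral_cong_AE)
    using AE_lborel_singleton[of a]
    by eventually_elim (auto simp: indicator_def)
  then show "wmass E \<le> Wfun w a" using wmass_mono[OF assms(2)] by simp
  show "Wfun w a \<le> wmass E" unfolding Wfun_eq_wmass by (rule wmass_mono[OF assms(1)])
qed

lemma wmass_Ioi: "wmass {0<..} = (SUP n::nat. Wfun w (real n))"
proof -
  have "wmass {0<..} = (\<integral>\<^sup>+ s. (SUP n::nat. ennreal (w s) * indicator {0<..<real n} s) \<partial>lborel)"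
    unfolding wmass_def
  proof (intro nn_integral_cong)
    fix s :: real
    obtain n :: nat where "s < real n" using reals_Archimedean2 by auto
    then show "ennreal (w s) * indicator {0<..} s = (SUP n::nat. ennreal (w s) * indicator {0<..<real n} s)"
      by (intro antisym SUP_least SUP_upper2[of n]) (auto simp: indicator_def)
  qed
  also have "\<dots> = (SUP n::nat. \<integral>\<^sup>+ s. ennreal (w s) * indicator {0<..<real n} s \<partial>lborel)"
    by (intro nn_integral_monotone_convergence_SUP) (auto simp: incseq_def le_fun_def indicator_def)
  finally show ?thesis unfolding Wfun_def .
qed

lemma borel_measurable_wmass_superlevel [measurable]:
  "(\<lambda>l. wmass (superlevel g (ennreal l))) \<in> borel_measurable borel"
  by (intro borel_measurable_antimono_ennreal antimonoI wmass_mono superlevel_antimono ennreal_leI)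

lemma emeasure_wmeasure:
  assumes "E \<in> sets borel" "E \<subseteq> {0<..}"
  shows "emeasure (wmeasure w) E = wmass E"
proof -
  have om: "{0::real<..} \<inter> space lborel \<in> sets lborel" by (simp add: greaterThan_borel)
  have "E \<in> sets (restrict_space lborel {0<..})"
    using assms by (subst sets_restrict_space_iff[OF om]) auto
  moreover have "(\<lambda>t. ennreal (w t)) \<in> borel_measurable (restrict_space lborel {0<..})"
    by (intro measurable_restrict_space1) measurable
  ultimately have "emeasure (wmeasure w) E = (\<integral>\<^sup>+ x. ennreal (w x) * indicator E x \<partial>restrict_space lborel {0<..})"
    unfolding wmeasure_def by (intro emeasure_density)
  also have "\<dots> = (\<integral>\<^sup>+ x. ennreal (w x) * indicator E x * indicator {0<..} x \<partial>lborel)"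
    by (rule nn_integral_restrict_space[OF om])
  also have "\<dots> = wmass E"
    unfolding wmass_def using assms by (intro nn_integral_cong) (auto simp: indicator_def)
  finally show ?thesis .
qed

lemma rearr_wmeasure:
  assumes "antimono_on {0<..} g"
  shows "rearr (wmeasure w) g t = Inf {s. wmass (superlevel g s) \<le> ennreal t}"
proof -
  have "{x \<in> space (wmeasure w). s < g x} = superlevel g s" for s
    unfolding wmeasure_def superlevel_def by (auto simp: space_restrict_space)
  then show ?thesis
    unfolding rearr_def using initial_segment_superlevel[OF assms]
    by (simp add: emeasure_wmeasure initial_segment_sets initial_segment_def)
qed

lemma rearr_wmeasure_less:
  assumes g: "antimono_on {0<..} g" and m: "m < rearr (wmeasure w) g t"
  shows "ennreal t < wmass (superlevel g m)"
proof (rule ccontr)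
  assume "\<not> ennreal t < wmass (superlevel g m)"
  then have "rearr (wmeasure w) g t \<le> m"
    unfolding rearr_wmeasure[OF g] by (intro Inf_lower) (simp add: not_less)
  then show False using m by simp
qed

lemma rearr_wmeasure_greater:
  assumes g: "antimono_on {0<..} g" and m: "0 < m" and t: "ennreal t < wmass (superlevel g (ennreal (2 * m)))"
  shows "ennreal m < rearr (wmeasure w) g t"
proof -
  have "ennreal (2 * m) \<le> rearr (wmeasure w) g t"
    unfolding rearr_wmeasure[OF g]
  proof (intro Inf_greatest)
    fix s assume s: "s \<in> {s. wmass (superlevel g s) \<le> ennreal t}"
    show "ennreal (2 * m) \<le> s"
    proof (rule ccontr)
      assume "\<not> ennreal (2 * m) \<le> s"
      then have "wmass (superlevel g (ennreal (2 * m))) \<le> wmass (superlevel g s)"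
        by (intro wmass_mono superlevel_antimono) simp
      then show False using s t by simp
    qed
  qed
  moreover have "ennreal m < ennreal (2 * m)" using m by (simp add: ennreal_less_iff)
  ultimately show ?thesis by simp
qed

definition Wavg :: "real \<Rightarrow> real" where "Wavg t = W t / t"

lemma borel_measurable_Wavg [measurable]: "Wavg \<in> borel_measurable borel"
  unfolding Wavg_def by measurable

lemma Wavg_antimono: "0 < a \<Longrightarrow> a \<le> b \<Longrightarrow> Wavg b \<le> Wavg a"
  unfolding Wavg_def using W_concave[of a b] by (simp add: field_simps)

lemma Wavg_nonneg: "0 \<le> Wavg t"
  unfolding Wavg_def using W_nonneg[of t] W_nonpos[of t] by (cases "t \<le> 0") auto

lemma Wavg_pos: "0 < r \<Longrightarrow> 0 < W r \<Longrightarrow> r \<le> s \<Longrightarrow> 0 < Wavg s"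
  unfolding Wavg_def using W_mono[of r s] by auto

lemma isCont_Wavg: "0 < a \<Longrightarrow> isCont Wavg a"
  unfolding Wavg_def by (intro continuous_intros isCont_W) auto

lemma w_eq_0_if_W_eq_0:
  assumes "0 < r" "W r = 0" "r \<le> s"
  shows "w s = 0"
proof -
  have "r * w r \<le> 0" using W_ge[OF assms(1)] assms(2) by simp
  then have "w r \<le> 0" using assms(1) by (simp add: mult_le_0_iff)
  then show ?thesis using w_antimono[of r s] w_nonneg[of s] assms by auto
qed

definition w_integral :: "(real \<Rightarrow> ennreal) \<Rightarrow> ennreal" where
  "w_integral f = (\<integral>\<^sup>+ t\<in>{0<..}. f t * ennreal (w t) \<partial>lborel)"

lemma w_integral_layer_cake:
  assumes f: "antimono_on {0<..} f"
  shows "w_integral f = (\<integral>\<^sup>+ l. indicator {0<..} l * wmass (superlevel f (ennreal l)) \<partial>lborel)"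
proof -
  have [measurable]: "(\<lambda>u. f u * indicator {0<..} u) \<in> borel_measurable borel"
    using borel_measurable_antimono_on_pos[OF f] .
  let ?F = "\<lambda>u l. (if 0 < l \<and> ennreal l < f u * indicator {0<..} u then 1 else 0) * ennreal (w u) :: ennreal"
  have "w_integral f = (\<integral>\<^sup>+ u. (\<integral>\<^sup>+ l. ?F u l \<partial>lborel) \<partial>lborel)"
    unfolding w_integral_def
  proof (intro nn_integral_cong)
    fix u
    have "f u * ennreal (w u) * indicator {0<..} u = (f u * indicator {0<..} u) * ennreal (w u)"
      by (auto simp: indicator_def)
    also have "\<dots> = emeasure lborel {l. 0 < l \<and> ennreal l < f u * indicator {0<..} u} * ennreal (w u)"
      by (simp only: emeasure_lborel_less_ennreal)
    also have "\<dots> = (\<integral>\<^sup>+ l. indicator {l. 0 < l \<and> ennreal l < f u * indicator {0<..} u} l * ennreal (w u) \<partial>lborel)"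
      by (subst nn_integral_multc) auto
    also have "\<dots> = (\<integral>\<^sup>+ l. ?F u l \<partial>lborel)"
      by (intro nn_integral_cong) (simp add: indicator_def)
    finally show "f u * ennreal (w u) * indicator {0<..} u = (\<integral>\<^sup>+ l. ?F u l \<partial>lborel)" .
  qed
  also have "\<dots> = (\<integral>\<^sup>+ l. (\<integral>\<^sup>+ u. ?F u l \<partial>lborel) \<partial>lborel)"
    by (rule lborel_pair.Fubini') measurable
  also have "\<dots> = (\<integral>\<^sup>+ l. indicator {0<..} l * wmass (superlevel f (ennreal l)) \<partial>lborel)"
    unfolding wmass_def
  proof (intro nn_integral_cong)
    fix l :: real
    show "(\<integral>\<^sup>+ u. ?F u l \<partial>lborel) = indicator {0<..} l * (\<integral>\<^sup>+ u\<in>superlevel f (ennreal l). ennreal (w u) \<partial>lborel)"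
      by (cases "0 < l") (simp_all, intro nn_integral_cong, auto simp: indicator_def superlevel_def)
  qed
  finally show ?thesis .
qed

end

section \<open>Lorentz functionals of decreasing functions\<close>

locale decreasing_weight_exponent = decreasing_weight +
  fixes q :: real
  assumes q_gt_1: "1 < q"
begin

definition Wq_density :: "real \<Rightarrow> ennreal" where
  "Wq_density s = enn_powr (Wfun w s) (q - 1) * ennreal (w s)"

lemma borel_measurable_Wq_density [measurable]: "Wq_density \<in> borel_measurable borel"
  unfolding Wq_density_def by measurable

definition Lambda_q :: "(real \<Rightarrow> ennreal) \<Rightarrow> ennreal" where
  "Lambda_q g = (\<integral>\<^sup>+ t\<in>{0<..}. enn_powr (g t) q * enn_powr (Wfun w t) (q - 1) * ennreal (w t) \<partial>lborel)"

definition Lorentz_q :: "(real \<Rightarrow> ennreal) \<Rightarrow> ennreal" where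
  "Lorentz_q g = (\<integral>\<^sup>+ t\<in>{0<..}. ennreal (t powr (q - 1)) * enn_powr (rearr (wmeasure w) g t) q \<partial>lborel)"

lemma Lambda_q_eq: "Lambda_q g = (\<integral>\<^sup>+ t. Wq_density t * indicator {0<..} t * enn_powr (g t) q \<partial>lborel)"
  unfolding Lambda_q_def Wq_density_def by (intro nn_integral_cong) (simp add: mult_ac)

lemma Lambda_q_cong: "(\<And>s. 0 < s \<Longrightarrow> g s = g' s) \<Longrightarrow> Lambda_q g = Lambda_q g'"
  unfolding Lambda_q_eq by (intro nn_integral_cong) (auto simp: indicator_def)

lemma Lambda_q_mono: "(\<And>s. 0 < s \<Longrightarrow> g s \<le> g' s) \<Longrightarrow> Lambda_q g \<le> Lambda_q g'"
  unfolding Lambda_q_eq using q_gt_1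
  by (intro nn_integral_mono) (auto simp: indicator_def intro!: mult_left_mono enn_powr_mono)

lemma Wq_density_integral_le:
  assumes E: "initial_segment E"
  shows "(\<integral>\<^sup>+ s\<in>E. Wq_density s \<partial>lborel) \<le> enn_powr (wmass E) q"
proof -
  have "(\<integral>\<^sup>+ s\<in>E. Wq_density s \<partial>lborel)
     \<le> (\<integral>\<^sup>+ s. enn_powr (wmass E) (q - 1) * (ennreal (w s) * indicator E s) \<partial>lborel)"
  proof (intro nn_integral_mono)
    fix s
    have "Wfun w s \<le> wmass E" if "s \<in> E"
      unfolding Wfun_eq_wmass using E that by (intro wmass_mono) (auto simp: initial_segment_def)
    then show "Wq_density s * indicator E s \<le> enn_powr (wmass E) (q - 1) * (ennreal (w s) * indicator E s)"
      unfolding Wq_density_def using q_gt_1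
      by (auto simp: indicator_def intro!: mult_right_mono enn_powr_mono)
  qed
  also have "\<dots> = enn_powr (wmass E) (q - 1) * wmass E"
    unfolding wmass_def using initial_segment_sets[OF E] by (subst nn_integral_cmult) auto
  also have "\<dots> = enn_powr (wmass E) q" using enn_powr_add[of "q - 1" 1 "wmass E"] q_gt_1 by simp
  finally show ?thesis .
qed

lemma W_half_crossing:
  assumes a: "0 < a"
  obtains b where "0 \<le> b" "b \<le> a" "\<And>s. b < s \<Longrightarrow> W a / 2 \<le> W s" "W a / 2 \<le> W a - W b"
proof (cases "\<exists>s0. 0 < s0 \<and> s0 \<le> a \<and> W s0 \<le> W a / 2")
  case True
  then obtain s0 where s0: "0 < s0" "s0 \<le> a" "W s0 \<le> W a / 2" by auto
  have "continuous_on {s0..a} W"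
    using s0 by (intro continuous_at_imp_continuous_on ballI isCont_W) auto
  moreover have "W a / 2 \<le> W a" using W_nonneg[of a] by auto
  ultimately obtain b where "s0 \<le> b" "b \<le> a" "W b = W a / 2"
    using IVT'[of W s0 "W a / 2" a] s0 by auto
  with s0 show ?thesis by (intro that[of b]) (auto dest: W_mono[OF less_imp_le])
next
  case False
  then have half_less: "W a / 2 < W a" using a by force
  have "W a / 2 \<le> W s" if s: "0 < s" for s
  proof (cases "s \<le> a")
    case True then show ?thesis using False s by force
  next
    case False then show ?thesis using half_less W_mono[of a s] by auto
  qed
  then show ?thesis using that[of 0] a W_nonpos[of 0] by auto
qed

lemma W_half_powr_le:
  assumes a: "0 < a"
  shows "enn_powr (ennreal (W a / 2)) q \<le> (\<integral>\<^sup>+ s\<in>{0<..<a}. Wq_density s \<partial>lborel)"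
proof -
  define c where "c = W a / 2"
  have c0: "0 \<le> c" unfolding c_def using W_nonneg by auto
  obtain b where b: "0 \<le> b" "b \<le> a" "\<And>s. b < s \<Longrightarrow> c \<le> W s" "c \<le> W a - W b"
    using W_half_crossing[OF a] unfolding c_def by blast
  have "ennreal (c powr q) = ennreal (c powr (q - 1)) * ennreal c"
    using c0 powr_add[of c "q - 1" 1] by (cases "c = 0") (simp_all add: ennreal_mult[symmetric] del: ennreal_mult)
  also have "\<dots> \<le> ennreal (c powr (q - 1)) * ennreal (W a - W b)"
    using b by (intro mult_left_mono ennreal_leI) auto
  also have "\<dots> = (\<integral>\<^sup>+ s. ennreal (c powr (q - 1)) * (ennreal (w s) * indicator {b<..<a} s) \<partial>lborel)"
    using b by (subst nn_integral_cmult) (auto simp: W_diff)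
  also have "\<dots> \<le> (\<integral>\<^sup>+ s\<in>{0<..<a}. Wq_density s \<partial>lborel)"
  proof (intro nn_integral_mono)
    fix s
    have "ennreal (c powr (q - 1)) \<le> enn_powr (Wfun w s) (q - 1)" if "b < s"
      using b c0 q_gt_1 that by (auto simp: enn_powr_Wfun intro!: ennreal_leI powr_mono2)
    then show "ennreal (c powr (q - 1)) * (ennreal (w s) * indicator {b<..<a} s) \<le> Wq_density s * indicator {0<..<a} s"
      unfolding Wq_density_def using b by (auto simp: indicator_def intro: mult_right_mono)
  qed
  finally show ?thesis unfolding c_def using W_nonneg[of a] by (simp add: enn_powr_ennreal)
qed

lemma wmass_powr_le:
  assumes E: "initial_segment E"
  shows "enn_powr (wmass E) q \<le> ennreal (2 powr q) * (\<integral>\<^sup>+ s\<in>E. Wq_density s \<partial>lborel)"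
proof -
  let ?I = "\<lambda>E. \<integral>\<^sup>+ s\<in>E. Wq_density s \<partial>lborel"
  have Wfun_le: "enn_powr (Wfun w a) q \<le> ennreal (2 powr q) * ?I E" if "0 < a" "{0<..<a} \<subseteq> E" for a
  proof -
    have "enn_powr (Wfun w a) q = ennreal (2 powr q) * enn_powr (ennreal (W a / 2)) q"
      using W_nonneg[of a]
      by (simp add: Wfun_eq_W enn_powr_ennreal ennreal_mult[symmetric] powr_divide del: ennreal_mult)
    also have "\<dots> \<le> ennreal (2 powr q) * ?I {0<..<a}" by (intro mult_left_mono W_half_powr_le that) auto
    also have "\<dots> \<le> ennreal (2 powr q) * ?I E"
      using that by (intro mult_left_mono nn_integral_mono) (auto simp: indicator_def)
    finally show ?thesis .
  qed
  from E show ?thesis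
  proof (cases rule: initial_segment_cases)
    case 1 then show ?thesis by (simp add: wmass_def)
  next
    case 2
    then have "enn_powr (wmass E) q = (SUP n::nat. enn_powr (Wfun w (real n)) q)"
      using q_gt_1 by (simp add: wmass_Ioi enn_powr_Sup image_image)
    also have "\<dots> \<le> ennreal (2 powr q) * ?I E"
    proof (intro SUP_least)
      fix n :: nat
      show "enn_powr (Wfun w (real n)) q \<le> ennreal (2 powr q) * ?I E"
      proof (cases "n = 0")
        case False
        then have "0 < real n" by simp
        moreover have "{0<..<real n} \<subseteq> E" using 2 by auto
        ultimately show ?thesis by (rule Wfun_le)
      qed (simp add: Wfun_def)
    qed
    finally show ?thesis .
  next
    case (3 a)
    then show ?thesis using Wfun_le[of a] by (simp add: wmass_eq_Wfun)
  qed
qed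

lemma borel_measurable_Wq_density_superlevel [measurable]:
  "(\<lambda>m. \<integral>\<^sup>+ s\<in>superlevel g (ennreal m). Wq_density s \<partial>lborel) \<in> borel_measurable borel"
  by (intro borel_measurable_antimono_ennreal antimonoI nn_integral_mono)
    (auto simp: indicator_def superlevel_def intro: le_less_trans ennreal_leI)

lemma Lambda_q_layer_cake:
  assumes g: "antimono_on {0<..} g"
  shows "Lambda_q g = (\<integral>\<^sup>+ m. ennreal (q * m powr (q - 1)) * indicator {0<..} m *
    (\<integral>\<^sup>+ s\<in>superlevel g (ennreal m). Wq_density s \<partial>lborel) \<partial>lborel)"
proof -
  have [measurable]: "(\<lambda>x. g x * indicator {0<..} x) \<in> borel_measurable borel"
    using borel_measurable_antimono_on_pos[OF g] .
  have inner: "(\<integral>\<^sup>+ t. (Wq_density t * indicator {0<..} t) * indicator {t. ennreal m < g t * indicator {0<..} t} t \<partial>lborel)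
    = (\<integral>\<^sup>+ s\<in>superlevel g (ennreal m). Wq_density s \<partial>lborel)" for m
    by (intro nn_integral_cong) (auto simp: indicator_def superlevel_def)
  have "Lambda_q g = (\<integral>\<^sup>+ t. (Wq_density t * indicator {0<..} t) * enn_powr (g t * indicator {0<..} t) q \<partial>lborel)"
    unfolding Lambda_q_eq by (intro nn_integral_cong) (simp add: indicator_def)
  also have "\<dots> = (\<integral>\<^sup>+ m. ennreal (q * m powr (q - 1)) * indicator {0<..} m *
     (\<integral>\<^sup>+ t. (Wq_density t * indicator {0<..} t) * indicator {t. ennreal m < g t * indicator {0<..} t} t \<partial>lborel) \<partial>lborel)"
    using q_gt_1 by (intro nn_integral_mult_enn_powr_layer_cake) auto
  finally show ?thesis unfolding inner .
qed

lemma Lorentz_q_layer_cake: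
  "Lorentz_q g = (\<integral>\<^sup>+ m. ennreal (q * m powr (q - 1)) * indicator {0<..} m *
     (\<integral>\<^sup>+ t. ennreal (t powr (q - 1)) * indicator {0<..} t * indicator {t. ennreal m < rearr (wmeasure w) g t} t \<partial>lborel) \<partial>lborel)"
proof -
  have "Lorentz_q g = (\<integral>\<^sup>+ t. (ennreal (t powr (q - 1)) * indicator {0<..} t) * enn_powr (rearr (wmeasure w) g t) q \<partial>lborel)"
    unfolding Lorentz_q_def by (intro nn_integral_cong) (auto simp: mult_ac)
  also have "\<dots> = (\<integral>\<^sup>+ m. ennreal (q * m powr (q - 1)) * indicator {0<..} m *
     (\<integral>\<^sup>+ t. ennreal (t powr (q - 1)) * indicator {0<..} t * indicator {t. ennreal m < rearr (wmeasure w) g t} t \<partial>lborel) \<partial>lborel)"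
    using q_gt_1 by (intro nn_integral_mult_enn_powr_layer_cake) auto
  finally show ?thesis .
qed

lemma Lorentz_q_layer_le:
  assumes g: "antimono_on {0<..} g"
  shows "(\<integral>\<^sup>+ t. ennreal (t powr (q - 1)) * indicator {0<..} t * indicator {t. ennreal m < rearr (wmeasure w) g t} t \<partial>lborel)
    \<le> ennreal (1 / q) * enn_powr (wmass (superlevel g (ennreal m))) q"
proof -
  have "(\<integral>\<^sup>+ t. ennreal (t powr (q - 1)) * indicator {0<..} t * indicator {t. ennreal m < rearr (wmeasure w) g t} t \<partial>lborel)
     \<le> (\<integral>\<^sup>+ t. ennreal (t powr (q - 1)) * indicator {t. 0 < t \<and> ennreal t < wmass (superlevel g (ennreal m))} t \<partial>lborel)"
    by (intro nn_integral_mono) (auto simp: indicator_def dest: rearr_wmeasure_less[OF g])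
  also have "\<dots> = ennreal (1 / q) * enn_powr (wmass (superlevel g (ennreal m))) q"
    using q_gt_1 by (intro nn_integral_powr_below) auto
  finally show ?thesis .
qed

lemma Lorentz_q_layer_ge:
  assumes g: "antimono_on {0<..} g" and m: "0 < m"
  shows "ennreal (1 / q) * enn_powr (wmass (superlevel g (ennreal (2 * m)))) q
    \<le> (\<integral>\<^sup>+ t. ennreal (t powr (q - 1)) * indicator {0<..} t * indicator {t. ennreal m < rearr (wmeasure w) g t} t \<partial>lborel)"
proof -
  have "ennreal (1 / q) * enn_powr (wmass (superlevel g (ennreal (2 * m)))) q
    = (\<integral>\<^sup>+ t. ennreal (t powr (q - 1)) * indicator {t. 0 < t \<and> ennreal t < wmass (superlevel g (ennreal (2 * m)))} t \<partial>lborel)"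
    using q_gt_1 by (intro nn_integral_powr_below[symmetric]) auto
  also have "\<dots> \<le> (\<integral>\<^sup>+ t. ennreal (t powr (q - 1)) * indicator {0<..} t * indicator {t. ennreal m < rearr (wmeasure w) g t} t \<partial>lborel)"
    using m by (intro nn_integral_mono) (auto simp: indicator_def intro: rearr_wmeasure_greater[OF g])
  finally show ?thesis .
qed

lemma Lorentz_q_le_Lambda_q:
  assumes g: "antimono_on {0<..} g"
  shows "Lorentz_q g \<le> ennreal (2 powr q / q) * Lambda_q g"
proof -
  let ?\<rho> = "\<lambda>m. ennreal (q * m powr (q - 1)) * indicator {0<..} m"
  have "Lorentz_q g \<le> (\<integral>\<^sup>+ m. ?\<rho> m * (ennreal (1 / q) * enn_powr (wmass (superlevel g (ennreal m))) q) \<partial>lborel)"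
    unfolding Lorentz_q_layer_cake by (intro nn_integral_mono mult_left_mono Lorentz_q_layer_le g) auto
  also have "\<dots> \<le> (\<integral>\<^sup>+ m. ennreal (2 powr q / q) * (?\<rho> m * (\<integral>\<^sup>+ s\<in>superlevel g (ennreal m). Wq_density s \<partial>lborel)) \<partial>lborel)"
  proof (intro nn_integral_mono)
    fix m
    have "ennreal (1 / q) * enn_powr (wmass (superlevel g (ennreal m))) q
      \<le> ennreal (1 / q) * (ennreal (2 powr q) * (\<integral>\<^sup>+ s\<in>superlevel g (ennreal m). Wq_density s \<partial>lborel))"
      by (intro mult_left_mono wmass_powr_le initial_segment_superlevel g) auto
    also have "\<dots> = ennreal (2 powr q / q) * (\<integral>\<^sup>+ s\<in>superlevel g (ennreal m). Wq_density s \<partial>lborel)"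
      using q_gt_1 by (simp add: mult.assoc[symmetric] ennreal_mult[symmetric] del: ennreal_mult)
    finally have "ennreal (1 / q) * enn_powr (wmass (superlevel g (ennreal m))) q
      \<le> ennreal (2 powr q / q) * (\<integral>\<^sup>+ s\<in>superlevel g (ennreal m). Wq_density s \<partial>lborel)" .
    then have "?\<rho> m * (ennreal (1 / q) * enn_powr (wmass (superlevel g (ennreal m))) q)
      \<le> ?\<rho> m * (ennreal (2 powr q / q) * (\<integral>\<^sup>+ s\<in>superlevel g (ennreal m). Wq_density s \<partial>lborel))"
      by (rule mult_left_mono) simp
    then show "?\<rho> m * (ennreal (1 / q) * enn_powr (wmass (superlevel g (ennreal m))) q)
      \<le> ennreal (2 powr q / q) * (?\<rho> m * (\<integral>\<^sup>+ s\<in>superlevel g (ennreal m). Wq_density s \<partial>lborel))"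
      by (simp only: mult.left_commute)
  qed
  also have "\<dots> = ennreal (2 powr q / q) * Lambda_q g"
    unfolding Lambda_q_layer_cake[OF g] by (intro nn_integral_cmult) measurable
  finally show ?thesis .
qed

lemma wmass_superlevel_dilated_le_Lorentz_q:
  assumes g: "antimono_on {0<..} g"
  shows "(\<integral>\<^sup>+ m. ennreal (q * m powr (q - 1)) * indicator {0<..} m *
      enn_powr (wmass (superlevel g (ennreal (2 * m)))) q \<partial>lborel) \<le> ennreal q * Lorentz_q g"
proof -
  let ?\<rho> = "\<lambda>m. ennreal (q * m powr (q - 1)) * indicator {0<..} m"
  let ?L = "\<lambda>m. \<integral>\<^sup>+ t. ennreal (t powr (q - 1)) * indicator {0<..} t * indicator {t. ennreal m < rearr (wmeasure w) g t} t \<partial>lborel"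
  let ?D = "\<lambda>m. enn_powr (wmass (superlevel g (ennreal (2 * m)))) q"
  have "(\<integral>\<^sup>+ m. ?\<rho> m * ?D m \<partial>lborel) \<le> (\<integral>\<^sup>+ m. ennreal q * (?\<rho> m * ?L m) \<partial>lborel)"
  proof (intro nn_integral_mono)
    fix m :: real
    have "?\<rho> m * ?D m \<le> ?\<rho> m * (ennreal q * ?L m)"
    proof (cases "0 < m")
      case True
      have "?D m = ennreal q * (ennreal (1 / q) * ?D m)"
        using q_gt_1 by (simp add: mult.assoc[symmetric] ennreal_mult[symmetric] del: ennreal_mult)
      also have "\<dots> \<le> ennreal q * ?L m"
        by (intro mult_left_mono Lorentz_q_layer_ge g True) auto
      finally show ?thesis by (rule mult_left_mono) simp
    qed simp
    then show "?\<rho> m * ?D m \<le> ennreal q * (?\<rho> m * ?L m)"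
      by (simp only: mult.left_commute)
  qed
  also have "\<dots> = ennreal q * Lorentz_q g"
    unfolding Lorentz_q_layer_cake by (intro nn_integral_cmult) measurable
  finally show ?thesis .
qed

lemma Lambda_q_le_Lorentz_q:
  assumes g: "antimono_on {0<..} g"
  shows "Lambda_q g \<le> ennreal (q * 2 powr q) * Lorentz_q g"
proof -
  let ?\<rho> = "\<lambda>m. ennreal (q * m powr (q - 1)) * indicator {0<..} m"
  define D where "D = (\<lambda>m. enn_powr (wmass (superlevel g (ennreal m))) q)"
  have [measurable]: "D \<in> borel_measurable borel"
    unfolding D_def by measurable
  have "Lambda_q g \<le> (\<integral>\<^sup>+ m. ?\<rho> m * D m \<partial>lborel)"
    unfolding Lambda_q_layer_cake[OF g] D_def
    by (intro nn_integral_mono mult_left_mono Wq_density_integral_le initial_segment_superlevel g) auto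
  \<comment> \<open>dilating the level by 2 compensates the factor 2 lost in rearr_wmeasure_greater\<close>
  also have "\<dots> = ennreal (2 powr q) * (\<integral>\<^sup>+ m. ?\<rho> m * D (2 * m) \<partial>lborel)"
    using q_gt_1 by (intro nn_integral_powr_weight_dilation) auto
  also have "\<dots> \<le> ennreal (2 powr q) * (ennreal q * Lorentz_q g)"
    unfolding D_def by (intro mult_left_mono wmass_superlevel_dilated_le_Lorentz_q g) auto
  also have "\<dots> = ennreal (q * 2 powr q) * Lorentz_q g"
    using q_gt_1 by (simp add: ennreal_mult mult_ac)
  finally show ?thesis .
qed

end

section \<open>The restricted Hardy inequality and the condition \<open>B\<^sub>1\<close>\<close>

context decreasing_weight_exponent
begin

definition restricted_hardy_bound :: "real \<Rightarrow> bool" where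
  "restricted_hardy_bound C \<longleftrightarrow>
    (\<forall>r>0. Lambda_q (hardy_ennreal (indicator {0<..<r})) \<le> ennreal C * enn_powr (Wfun w r) q)"

lemma restricted_hardy_boundD:
  "restricted_hardy_bound C \<Longrightarrow> 0 < r
    \<Longrightarrow> Lambda_q (hardy_ennreal (indicator {0<..<r})) \<le> ennreal C * enn_powr (Wfun w r) q"
  unfolding restricted_hardy_bound_def by blast

lemma restricted_hardy_bound_mono:
  assumes "restricted_hardy_bound C" "C \<le> C'"
  shows "restricted_hardy_bound C'"
  unfolding restricted_hardy_bound_def
proof (intro allI impI)
  fix r :: real assume "0 < r"
  from restricted_hardy_boundD[OF assms(1) this]
  show "Lambda_q (hardy_ennreal (indicator {0<..<r})) \<le> ennreal C' * enn_powr (Wfun w r) q"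
    by (rule order_trans) (auto intro!: mult_right_mono ennreal_leI assms(2))
qed

lemma W_powr_tail_le:
  assumes r: "0 < r" and t: "r < t"
  shows "(r / t) powr q * W t powr (q - 1) \<le> r * W r powr (q - 1) / t"
proof -
  have "W t \<le> t / r * W r" using W_concave[of r t] r t by (simp add: field_simps)
  then have "(r / t) powr q * W t powr (q - 1) \<le> (r / t) powr q * ((t / r) powr (q - 1) * W r powr (q - 1))"
    using r t q_gt_1 W_nonneg by (auto simp: powr_mult[symmetric] intro!: mult_left_mono powr_mono2)
  moreover have "(r / t) powr q * (t / r) powr (q - 1) = r / t"
    using r t by (simp add: powr_diff powr_divide)
  ultimately show ?thesis by (simp add: mult.assoc[symmetric])
qed

lemma Lambda_q_hardy_indicator_le:
  assumes r: "0 < r"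
  shows "Lambda_q (hardy_ennreal (indicator {0<..<r}))
    \<le> ennreal (W r powr (q - 1)) * (Wfun w r + ennreal r * (\<integral>\<^sup>+ s\<in>{r<..}. ennreal (w s / s) \<partial>lborel))"
proof -
  define A where "A = W r powr (q - 1)"
  have "Lambda_q (hardy_ennreal (indicator {0<..<r})) \<le>
    (\<integral>\<^sup>+ t. ennreal A * (ennreal (w t) * indicator {0<..r} t) + ennreal (r * A) * (ennreal (w t / t) * indicator {r<..} t) \<partial>lborel)"
    unfolding Lambda_q_def
  proof (intro nn_integral_mono)
    fix t :: real
    consider "t \<le> 0" | "0 < t" "t \<le> r" | "r < t" by linarith
    then show "enn_powr (hardy_ennreal (indicator {0<..<r}) t) q * enn_powr (Wfun w t) (q - 1) * ennreal (w t) * indicator {0<..} t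
       \<le> ennreal A * (ennreal (w t) * indicator {0<..r} t) + ennreal (r * A) * (ennreal (w t / t) * indicator {r<..} t)"
    proof cases
      case 2
      then have "enn_powr (Wfun w t) (q - 1) \<le> ennreal A"
        unfolding A_def using q_gt_1 W_nonneg by (auto simp: enn_powr_Wfun intro!: ennreal_leI powr_mono2 W_mono)
      then show ?thesis using 2 hardy_ennreal_indicator[of t r]
        by (auto simp: indicator_def intro: mult_right_mono order_trans[OF _ add_increasing2])
    next
      case 3
      have "enn_powr (hardy_ennreal (indicator {0<..<r}) t) q * enn_powr (Wfun w t) (q - 1) * ennreal (w t)
          = ennreal ((r / t) powr q * W t powr (q - 1) * w t)"
        using hardy_ennreal_indicator[of t r] r 3 w_nonneg[of t]
        by (simp add: enn_powr_Wfun enn_powr_ennreal ennreal_mult)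
      also have "\<dots> \<le> ennreal (r * A * (w t / t))"
        using mult_right_mono[OF W_powr_tail_le[OF r 3] w_nonneg[of t]] r 3 unfolding A_def
        by (intro ennreal_leI) (simp add: field_simps)
      also have "\<dots> = ennreal (r * A) * ennreal (w t / t)"
        using r by (intro ennreal_mult') (simp add: A_def)
      finally show ?thesis using 3 r by (auto simp: indicator_def)
    qed (simp add: indicator_def)
  qed
  also have "\<dots> = ennreal A * wmass {0<..r} + ennreal (r * A) * (\<integral>\<^sup>+ s\<in>{r<..}. ennreal (w s / s) \<partial>lborel)"
    unfolding wmass_def by (subst nn_integral_add) (auto simp: nn_integral_cmult)
  also have "wmass {0<..r} = Wfun w r"
    using r by (intro wmass_eq_Wfun) auto
  finally show ?thesis
    unfolding A_def using r by (simp add: distrib_left ennreal_mult mult_ac)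
qed

lemma B1_imp_restricted_hardy_bound:
  assumes "B1 w"
  obtains C where "restricted_hardy_bound C"
proof -
  obtain C0 where C0: "\<And>r. r > 0 \<Longrightarrow> (\<integral>\<^sup>+ s\<in>{r<..}. ennreal (w s / s) \<partial>lborel) \<le> ennreal (C0 / r) * Wfun w r"
    using assms unfolding B1_def by auto
  define C where "C = max C0 0"
  have "Lambda_q (hardy_ennreal (indicator {0<..<r})) \<le> ennreal (1 + C) * enn_powr (Wfun w r) q" if r: "0 < r" for r
  proof -
    have "ennreal r * (\<integral>\<^sup>+ s\<in>{r<..}. ennreal (w s / s) \<partial>lborel) \<le> ennreal r * (ennreal (C / r) * Wfun w r)"
      using C0[OF r] r unfolding C_def
      by (intro mult_left_mono order_trans[OF C0[OF r]] mult_right_mono ennreal_leI divide_right_mono) auto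
    also have "\<dots> = ennreal C * Wfun w r"
      using r by (simp add: mult.assoc[symmetric] ennreal_mult[symmetric] C_def del: ennreal_mult)
    finally have "Lambda_q (hardy_ennreal (indicator {0<..<r}))
      \<le> ennreal (W r powr (q - 1)) * (Wfun w r + ennreal C * Wfun w r)"
      by (intro order_trans[OF Lambda_q_hardy_indicator_le[OF r]] mult_left_mono add_left_mono) auto
    also have "\<dots> = ennreal (1 + C) * enn_powr (Wfun w r) q"
    proof -
      have "W r powr (q - 1) * W r = W r powr q"
        using W_nonneg[of r] powr_add[of "W r" "q - 1" 1] by (cases "W r = 0") auto
      then have "W r powr (q - 1) * (W r + C * W r) = (1 + C) * W r powr q"
        by (simp add: algebra_simps)
      moreover have "0 \<le> C" by (simp add: C_def)
      ultimately show ?thesis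
        unfolding Wfun_eq_W enn_powr_ennreal[OF W_nonneg] using W_nonneg[of r]
        by (simp add: ennreal_mult[symmetric] ennreal_plus[symmetric] del: ennreal_mult ennreal_plus)
    qed
    finally show ?thesis .
  qed
  then show ?thesis using that unfolding restricted_hardy_bound_def by blast
qed

definition Wavg_tail :: "real \<Rightarrow> ennreal" where
  "Wavg_tail a = (\<integral>\<^sup>+ t\<in>{a<..}. ennreal (Wavg t powr (q - 1) * w t / t) \<partial>lborel)"

lemma Wavg_tail_le:
  assumes C: "restricted_hardy_bound C" and a: "0 < a"
  shows "Wavg_tail a \<le> ennreal C * ennreal (Wavg a powr q)"
proof -
  have "ennreal (a powr q) * Wavg_tail a
      = (\<integral>\<^sup>+ t. ennreal (a powr q) * (ennreal (Wavg t powr (q - 1) * w t / t) * indicator {a<..} t) \<partial>lborel)"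
    unfolding Wavg_tail_def by (subst nn_integral_cmult) (auto intro!: measurable_compose[OF _ borel_measurable_indicator])
  also have "\<dots> \<le> Lambda_q (hardy_ennreal (indicator {0<..<a}))"
    unfolding Lambda_q_def
  proof (intro nn_integral_mono)
    fix t :: real
    show "ennreal (a powr q) * (ennreal (Wavg t powr (q - 1) * w t / t) * indicator {a<..} t)
      \<le> enn_powr (hardy_ennreal (indicator {0<..<a}) t) q * enn_powr (Wfun w t) (q - 1) * ennreal (w t) * indicator {0<..} t"
    proof (cases "a < t")
      case True
      then have t0: "0 < t" using a by auto
      have "W t = t * Wavg t" unfolding Wavg_def using t0 by simp
      then have "(a / t) powr q * W t powr (q - 1) = a powr q * (Wavg t powr (q - 1) / t)"
        using t0 a Wavg_nonneg[of t] by (simp add: powr_mult powr_divide powr_diff field_simps)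
      then have "enn_powr (hardy_ennreal (indicator {0<..<a}) t) q * enn_powr (Wfun w t) (q - 1) * ennreal (w t)
          = ennreal (a powr q * (Wavg t powr (q - 1) * w t / t))"
        using hardy_ennreal_indicator[of t a] True a t0 w_nonneg[of t]
        by (simp add: enn_powr_Wfun enn_powr_ennreal ennreal_mult[symmetric] del: ennreal_mult)
      then show ?thesis using True t0 by (simp add: indicator_def ennreal_mult'[symmetric])
    qed (simp add: indicator_def)
  qed
  also have "\<dots> \<le> ennreal C * enn_powr (Wfun w a) q" using restricted_hardy_boundD[OF C a] .
  also have "enn_powr (Wfun w a) q = ennreal (a powr q) * ennreal (Wavg a powr q)"
  proof -
    have "W a = a * Wavg a" unfolding Wavg_def using a by simp
    then show ?thesis using a Wavg_nonneg[of a] q_gt_1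
      by (simp add: Wfun_eq_W enn_powr_ennreal W_nonneg enn_powr_mult ennreal_mult)
  qed
  finally have "ennreal (a powr q) * Wavg_tail a \<le> ennreal (a powr q) * (ennreal C * ennreal (Wavg a powr q))"
    by (simp add: mult_ac)
  then show ?thesis using a by (subst (asm) ennreal_mult_le_mult_iff) auto
qed

lemma Wavg_tail_sublevel_le:
  assumes C: "restricted_hardy_bound C" and r: "0 < r" and l: "0 < l"
  shows "(\<integral>\<^sup>+ s. ennreal (Wavg s powr (q - 1) * w s / s) * indicator {s. r < s \<and> Wavg s < l} s \<partial>lborel)
    \<le> ennreal C * ennreal (l powr q)"
proof (cases "{s. r < s \<and> Wavg s < l} = {}")
  case False
  define S where "S = {s. r < s \<and> Wavg s < l}"
  have Sne: "S \<noteq> {}" using False unfolding S_def .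
  have bdd: "bdd_below S" unfolding S_def bdd_below_def by (auto intro: less_imp_le)
  define a where "a = Inf S"
  have "r \<le> a" unfolding a_def using Sne by (intro cInf_greatest) (auto simp: S_def)
  then have a0: "0 < a" using r by auto
  have aS: "a \<le> s" if "s \<in> S" for s unfolding a_def using cInf_lower[OF that bdd] .
  \<comment> \<open>\<open>Wavg\<close> is decreasing, so \<open>S\<close> is a half-line from \<open>a\<close>; by continuity \<open>Wavg a \<le> l\<close>\<close>
  have "Wavg a \<le> l"
  proof (rule ccontr)
    assume "\<not> Wavg a \<le> l"
    then have "eventually (\<lambda>y. l < Wavg y) (at a)"
      using isCont_Wavg[OF a0] unfolding isCont_def by (intro order_tendstoD) auto
    then obtain d where d: "0 < d" "\<And>y. y \<noteq> a \<Longrightarrow> dist y a < d \<Longrightarrow> l < Wavg y"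
      unfolding eventually_at by auto
    obtain s where s: "s \<in> S" "s < a + d" using cInf_less_iff[OF Sne bdd, of "a + d"] d a_def by auto
    then have "l < Wavg s"
      using d(2)[of s] aS[OF s(1)] \<open>\<not> Wavg a \<le> l\<close> by (cases "s = a") (auto simp: dist_real_def)
    then show False using s unfolding S_def by auto
  qed
  have "(\<integral>\<^sup>+ s. ennreal (Wavg s powr (q - 1) * w s / s) * indicator S s \<partial>lborel) \<le> Wavg_tail a"
    unfolding Wavg_tail_def
    apply (intro nn_integral_mono_AE)
    using AE_lborel_singleton[of a]
    apply eventually_elim
    using aS by (auto simp: indicator_def less_le)
  also have "\<dots> \<le> ennreal C * ennreal (Wavg a powr q)" using Wavg_tail_le[OF C a0] .
  also have "\<dots> \<le> ennreal C * ennreal (l powr q)"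
    using \<open>Wavg a \<le> l\<close> Wavg_nonneg[of a] q_gt_1 by (intro mult_left_mono ennreal_leI powr_mono2) auto
  finally show ?thesis unfolding S_def .
qed simp

lemma tail_w_div_eq:
  assumes r: "0 < r" and Wr: "0 < W r"
  shows "(\<integral>\<^sup>+ s\<in>{r<..}. ennreal (w s / s) \<partial>lborel) = ennreal (Wavg r powr (1 - q)) * Wavg_tail r
    + (\<integral>\<^sup>+ l. ennreal ((q - 1) * l powr (- q)) * indicator {0<..Wavg r} l *
        (\<integral>\<^sup>+ s. ennreal (Wavg s powr (q - 1) * w s / s) * indicator {s. r < s \<and> Wavg s < l} s \<partial>lborel) \<partial>lborel)"
proof -
  define c where "c = Wavg r"
  define u where "u s = ennreal (Wavg s powr (q - 1) * w s / s)" for s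
  define F where "F s l = ennreal ((q - 1) * l powr (- q)) * indicator {0<..c} l * (u s * indicator {s. r < s \<and> Wavg s < l} s)" for s l
  have [measurable]: "u \<in> borel_measurable borel" unfolding u_def by measurable
  have [measurable]: "(\<lambda>(s, l). F s l) \<in> borel_measurable (lborel \<Otimes>\<^sub>M lborel)" unfolding F_def by measurable
  have pos: "0 < Wavg s" and le_c: "Wavg s \<le> c" if "r < s" for s
    using that r Wr by (auto simp: c_def intro: Wavg_pos Wavg_antimono)
  \<comment> \<open>\<open>w s / s = Wavg s powr (1 - q) * u s\<close>, and \<open>Wavg s powr (1 - q) - c powr (1 - q)\<close>
    is the integral of \<open>(q - 1) * l powr (- q)\<close> over \<open>Wavg s < l \<le> c\<close>\<close>
  have layer: "ennreal (w s / s) * indicator {r<..} s = ennreal (c powr (1 - q)) * (u s * indicator {r<..} s) + (\<integral>\<^sup>+ l. F s l \<partial>lborel)" for s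
  proof (cases "r < s")
    case True
    have "(\<integral>\<^sup>+ l. F s l \<partial>lborel) = (\<integral>\<^sup>+ l. ennreal ((q - 1) * l powr (- q)) * indicator {Wavg s<..c} l \<partial>lborel) * u s"
      unfolding F_def using True pos[OF True]
      by (subst nn_integral_multc[symmetric]) (measurable, intro nn_integral_cong, auto simp: indicator_def)
    also have "\<dots> = ennreal (Wavg s powr (1 - q) - c powr (1 - q)) * u s"
      using nn_integral_powr_neg[OF q_gt_1 pos[OF True] le_c[OF True]] by simp
    finally have "ennreal (c powr (1 - q)) * u s + (\<integral>\<^sup>+ l. F s l \<partial>lborel) = ennreal (Wavg s powr (1 - q)) * u s"
      using pos[OF True] le_c[OF True] q_gt_1
      by (simp add: distrib_right[symmetric] ennreal_plus[symmetric] powr_mono2' del: ennreal_plus)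
    also have "\<dots> = ennreal (w s / s)"
      using pos[OF True] True r
      by (simp add: u_def ennreal_mult'[symmetric] mult.assoc[symmetric] powr_add[symmetric])
    finally show ?thesis using True by (simp add: indicator_def)
  qed (simp add: F_def indicator_def)
  have "(\<integral>\<^sup>+ s\<in>{r<..}. ennreal (w s / s) \<partial>lborel)
      = ennreal (c powr (1 - q)) * Wavg_tail r + (\<integral>\<^sup>+ s. (\<integral>\<^sup>+ l. F s l \<partial>lborel) \<partial>lborel)"
    unfolding layer Wavg_tail_def u_def
    by (subst nn_integral_add) (measurable, simp add: nn_integral_cmult)
  also have "(\<integral>\<^sup>+ s. (\<integral>\<^sup>+ l. F s l \<partial>lborel) \<partial>lborel) = (\<integral>\<^sup>+ l. (\<integral>\<^sup>+ s. F s l \<partial>lborel) \<partial>lborel)"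
    by (rule lborel_pair.Fubini') measurable
  also have "\<dots> = (\<integral>\<^sup>+ l. ennreal ((q - 1) * l powr (- q)) * indicator {0<..c} l *
        (\<integral>\<^sup>+ s. u s * indicator {s. r < s \<and> Wavg s < l} s \<partial>lborel) \<partial>lborel)"
    unfolding F_def by (subst nn_integral_cmult) measurable
  finally show ?thesis unfolding c_def u_def .
qed

lemma tail_layer_integral_le:
  assumes C: "restricted_hardy_bound C" "0 \<le> C" and r: "0 < r" and c: "0 \<le> c"
  shows "(\<integral>\<^sup>+ l. ennreal ((q - 1) * l powr (- q)) * indicator {0<..c} l *
      (\<integral>\<^sup>+ s. ennreal (Wavg s powr (q - 1) * w s / s) * indicator {s. r < s \<and> Wavg s < l} s \<partial>lborel) \<partial>lborel)
    \<le> ennreal (C * (q - 1)) * ennreal c"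
proof -
  have "(\<integral>\<^sup>+ l. ennreal ((q - 1) * l powr (- q)) * indicator {0<..c} l *
        (\<integral>\<^sup>+ s. ennreal (Wavg s powr (q - 1) * w s / s) * indicator {s. r < s \<and> Wavg s < l} s \<partial>lborel) \<partial>lborel)
    \<le> (\<integral>\<^sup>+ l. ennreal (C * (q - 1)) * indicator {0<..c} l \<partial>lborel)"
  proof (intro nn_integral_mono)
    fix l :: real
    have "ennreal ((q - 1) * l powr (- q)) * ennreal (C * l powr q) = ennreal (C * (q - 1))" if "0 < l"
    proof -
      have "(q - 1) * l powr (- q) * (C * l powr q) = C * (q - 1) * (l powr (- q) * l powr q)"
        by (simp only: mult_ac)
      also have "l powr (- q) * l powr q = 1" using that by (simp add: powr_add[symmetric])
      finally have eq: "(q - 1) * l powr (- q) * (C * l powr q) = C * (q - 1)" by simp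
      have "ennreal ((q - 1) * l powr (- q)) * ennreal (C * l powr q) = ennreal ((q - 1) * l powr (- q) * (C * l powr q))"
        using q_gt_1 by (intro ennreal_mult'[symmetric]) simp
      then show ?thesis unfolding eq .
    qed
    then show "ennreal ((q - 1) * l powr (- q)) * indicator {0<..c} l *
        (\<integral>\<^sup>+ s. ennreal (Wavg s powr (q - 1) * w s / s) * indicator {s. r < s \<and> Wavg s < l} s \<partial>lborel)
      \<le> ennreal (C * (q - 1)) * indicator {0<..c} l"
      using Wavg_tail_sublevel_le[OF C(1) r, of l] C(2)
      by (cases "0 < l \<and> l \<le> c")
         (auto simp: indicator_def ennreal_mult[symmetric] intro: order_trans[OF mult_left_mono])
  qed
  also have "\<dots> = ennreal (C * (q - 1)) * ennreal c"
    using c by (subst nn_integral_cmult_indicator) auto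
  finally show ?thesis .
qed

lemma tail_w_div_le:
  assumes C: "restricted_hardy_bound C" "0 \<le> C" and r: "0 < r"
  shows "(\<integral>\<^sup>+ s\<in>{r<..}. ennreal (w s / s) \<partial>lborel) \<le> ennreal (C * q / r) * Wfun w r"
proof (cases "W r = 0")
  case True
  then have "(\<lambda>s. ennreal (w s / s) * indicator {r<..} s) = (\<lambda>s. 0)"
    using w_eq_0_if_W_eq_0[OF r True] by (auto simp: fun_eq_iff indicator_def)
  then show ?thesis by simp
next
  case False
  then have Wr: "0 < W r" using W_nonneg[of r] by auto
  define c where "c = Wavg r"
  have c0: "0 < c" unfolding c_def using Wavg_pos[OF r Wr] by simp
  have "(\<integral>\<^sup>+ s\<in>{r<..}. ennreal (w s / s) \<partial>lborel)
      \<le> ennreal (c powr (1 - q)) * (ennreal C * ennreal (c powr q)) + ennreal (C * (q - 1)) * ennreal c"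
    unfolding tail_w_div_eq[OF r Wr]
    using Wavg_tail_le[OF C(1) r] tail_layer_integral_le[OF C r, of c] c0 unfolding c_def
    by (intro add_mono mult_left_mono) auto
  also have "\<dots> = ennreal (C * q / r) * Wfun w r"
  proof -
    have cW: "c = W r / r" unfolding c_def Wavg_def ..
    have "c powr (1 - q) * c powr q = c" using c0 by (simp add: powr_add[symmetric])
    then have "c powr (1 - q) * (C * c powr q) + C * (q - 1) * c = C * q / r * W r"
      using r unfolding cW by (simp add: field_simps)
    then show ?thesis
      using c0 C(2) q_gt_1 r W_nonneg[of r]
      by (simp add: Wfun_eq_W ennreal_mult[symmetric] ennreal_plus[symmetric] del: ennreal_mult ennreal_plus)
  qed
  finally show ?thesis .
qed

lemma restricted_hardy_bound_imp_B1:
  assumes "restricted_hardy_bound C"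
  shows "B1 w"
proof -
  have "restricted_hardy_bound (max C 0)"
    using assms by (rule restricted_hardy_bound_mono) simp
  then show ?thesis
    unfolding B1_def using tail_w_div_le[of "max C 0"] by auto
qed

end

section \<open>From the restricted to the full Hardy inequality\<close>

context decreasing_weight_exponent
begin

lemma Lambda_q_hardy_initial_segment_le:
  assumes C: "restricted_hardy_bound C" "1 \<le> C" and E: "initial_segment E"
  shows "Lambda_q (hardy_ennreal (indicator E)) \<le> ennreal C * enn_powr (wmass E) q"
  using E
proof (cases rule: initial_segment_cases)
  case 1
  then show ?thesis by (simp add: hardy_ennreal_def Lambda_q_def)
next
  case 2
  have "hardy_ennreal (indicator E) t = 1" if "0 < t" for t
  proof -
    have "(\<lambda>s. indicator E s * indicator {0<..<t} s :: ennreal) = indicator {0<..<t}"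
      unfolding 2 by (auto simp: fun_eq_iff indicator_def)
    then show ?thesis
      unfolding hardy_ennreal_def using that by (simp add: ennreal_mult[symmetric] del: ennreal_mult)
  qed
  then have "Lambda_q (hardy_ennreal (indicator E)) = (\<integral>\<^sup>+ s\<in>E. Wq_density s \<partial>lborel)"
    unfolding Lambda_q_eq 2 by (intro nn_integral_cong) (auto simp: indicator_def)
  also have "\<dots> \<le> enn_powr (wmass E) q" by (rule Wq_density_integral_le[OF E])
  also have "\<dots> \<le> ennreal C * enn_powr (wmass E) q"
    using mult_right_mono[of 1 "ennreal C" "enn_powr (wmass E) q"] C(2) by simp
  finally show ?thesis .
next
  case (3 a)
  have "AE s in lborel. 0 < s \<longrightarrow> indicator E s = (indicator {0<..<a} s :: ennreal)"
    using AE_lborel_singleton[of a] by eventually_elim (use 3 in \<open>auto simp: indicator_def\<close>)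
  then have "Lambda_q (hardy_ennreal (indicator E)) = Lambda_q (hardy_ennreal (indicator {0<..<a}))"
    unfolding Lambda_q_def using hardy_ennreal_cong_AE by presburger
  also have "\<dots> \<le> ennreal C * enn_powr (Wfun w a) q" using restricted_hardy_boundD[OF C(1) 3(1)] .
  finally show ?thesis using 3 by (simp add: wmass_eq_Wfun)
qed

definition hardy_pairing :: "(real \<Rightarrow> ennreal) \<Rightarrow> real set \<Rightarrow> ennreal" where
  "hardy_pairing f E = (\<integral>\<^sup>+ s. Wq_density s * indicator {0<..} s * enn_powr (hardy_ennreal f s) (q - 1)
     * hardy_ennreal (indicator E) s \<partial>lborel)"

lemma hardy_pairing_Young:
  assumes f: "antimono_on {0<..} f" and E: "initial_segment E" and \<sigma>: "0 < \<sigma>"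
  shows "hardy_pairing f E \<le> ennreal ((q - 1) / q / \<sigma>) * Lambda_q (hardy_ennreal f)
    + ennreal (\<sigma> powr (q - 1) / q) * Lambda_q (hardy_ennreal (indicator E))"
proof -
  have [measurable]: "hardy_ennreal f \<in> borel_measurable borel" "hardy_ennreal (indicator E) \<in> borel_measurable borel"
    using f antimono_on_indicator_initial_segment[OF E] by (auto intro: borel_measurable_hardy_ennreal)
  show ?thesis
    unfolding hardy_pairing_def Lambda_q_eq by (rule nn_integral_Youngs_inequality_scaled[OF q_gt_1 \<sigma>]) measurable
qed

lemma hardy_pairing_eq_0:
  assumes f: "antimono_on {0<..} f" and E: "initial_segment E"
    and "Lambda_q (hardy_ennreal (indicator E)) = 0"
  shows "hardy_pairing f E = 0"
proof -
  let ?\<mu> = "\<lambda>s. Wq_density s * indicator {0<..} s"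
  have [measurable]: "hardy_ennreal f \<in> borel_measurable borel" "hardy_ennreal (indicator E) \<in> borel_measurable borel"
    using f antimono_on_indicator_initial_segment[OF E] by (auto intro: borel_measurable_hardy_ennreal)
  have "AE s in lborel. ?\<mu> s * enn_powr (hardy_ennreal (indicator E) s) q = 0"
    using assms(3) unfolding Lambda_q_eq by (subst (asm) nn_integral_0_iff_AE) auto
  then have "AE s in lborel. ?\<mu> s * enn_powr (hardy_ennreal f s) (q - 1) * hardy_ennreal (indicator E) s = 0"
    by eventually_elim (use q_gt_1 in \<open>auto simp: enn_powr_eq_0_iff\<close>)
  then show ?thesis unfolding hardy_pairing_def by (subst nn_integral_0_iff_AE) auto
qed

lemma hardy_pairing_le:
  assumes C: "restricted_hardy_bound C" "1 \<le> C" and f: "antimono_on {0<..} f"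
    and P: "Lambda_q (hardy_ennreal f) \<le> ennreal P" "0 \<le> P" and E: "initial_segment E" and e: "0 < e"
  shows "hardy_pairing f E \<le> wmass E * ennreal ((q - 1) / q / e * P + C * e powr (q - 1) / q)"
proof -
  define M where "M = (q - 1) / q / e * P + C * e powr (q - 1) / q"
  have M0: "0 < M" unfolding M_def using q_gt_1 P e C by (intro add_nonneg_pos) auto
  have PE: "Lambda_q (hardy_ennreal (indicator E)) \<le> ennreal C * enn_powr (wmass E) q"
    by (rule Lambda_q_hardy_initial_segment_le[OF C E])
  have "hardy_pairing f E \<le> wmass E * ennreal M"
  proof (cases "wmass E" rule: ennreal_cases)
    case (real n)
    show ?thesis
    proof (cases "n = 0")
      case True
      then show ?thesis using PE real q_gt_1 by (simp add: hardy_pairing_eq_0[OF f E])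
    next
      case False
      then have n0: "0 < n" using real by auto
      \<comment> \<open>this choice makes the bound from Young's inequality linear in \<open>wmass E\<close>\<close>
      define \<sigma> where "\<sigma> = e / n"
      have \<sigma>0: "0 < \<sigma>" unfolding \<sigma>_def using e n0 by simp
      have "hardy_pairing f E \<le> ennreal ((q - 1) / q / \<sigma>) * ennreal P
          + ennreal (\<sigma> powr (q - 1) / q) * (ennreal C * ennreal (n powr q))"
        using P PE real
        by (intro order_trans[OF hardy_pairing_Young[OF f E \<sigma>0]] add_mono mult_left_mono)
          (auto simp: enn_powr_ennreal)
      also have "\<dots> = ennreal ((q - 1) / q / \<sigma> * P + \<sigma> powr (q - 1) / q * C * n powr q)"
        using q_gt_1 \<sigma>0 P C
        by (simp add: ennreal_mult[symmetric] ennreal_plus[symmetric] mult.assoc del: ennreal_mult ennreal_plus)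
      also have "(q - 1) / q / \<sigma> * P + \<sigma> powr (q - 1) / q * C * n powr q = n * M"
      proof -
        have "\<sigma> powr (q - 1) * n powr q = e powr (q - 1) * n"
          unfolding \<sigma>_def using e n0 powr_add[of n "q - 1" 1] by (simp add: powr_divide field_simps)
        then show ?thesis unfolding M_def \<sigma>_def using n0 e by (simp add: field_simps)
      qed
      also have "ennreal (n * M) = wmass E * ennreal M" using real n0 M0 by (simp add: ennreal_mult)
      finally show ?thesis .
    qed
  qed (use M0 in \<open>simp add: ennreal_top_mult\<close>)
  then show ?thesis unfolding M_def .
qed

lemma Lambda_q_hardy_layer_cake:
  assumes f: "antimono_on {0<..} f"
  shows "Lambda_q (hardy_ennreal f)
    = (\<integral>\<^sup>+ l. indicator {0<..} l * hardy_pairing f (superlevel f (ennreal l)) \<partial>lborel)"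
proof -
  let ?a = "\<lambda>s. Wq_density s * indicator {0<..} s * enn_powr (hardy_ennreal f s) (q - 1)"
  let ?k = "\<lambda>s l. hardy_ennreal (indicator (superlevel f (ennreal l))) s"
  have [measurable]: "hardy_ennreal f \<in> borel_measurable borel"
    by (rule borel_measurable_hardy_ennreal[OF f])
  have [measurable]: "(\<lambda>(s, l). ?k s l) \<in> borel_measurable (lborel \<Otimes>\<^sub>M lborel)"
    by (rule measurable_hardy_ennreal_superlevel[OF f])
  have "Lambda_q (hardy_ennreal f) = (\<integral>\<^sup>+ s. ?a s * hardy_ennreal f s \<partial>lborel)"
    unfolding Lambda_q_eq using enn_powr_add[of "q - 1" 1] q_gt_1
    by (intro nn_integral_cong) (simp add: mult.assoc)
  also have "\<dots> = (\<integral>\<^sup>+ s. (\<integral>\<^sup>+ l. ?a s * (indicator {0<..} l * ?k s l) \<partial>lborel) \<partial>lborel)"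
    by (intro nn_integral_cong, subst hardy_ennreal_layer_cake[OF f], rule nn_integral_cmult[symmetric]) measurable
  also have "\<dots> = (\<integral>\<^sup>+ l. (\<integral>\<^sup>+ s. ?a s * (indicator {0<..} l * ?k s l) \<partial>lborel) \<partial>lborel)"
    by (rule lborel_pair.Fubini'[symmetric]) measurable
  also have "\<dots> = (\<integral>\<^sup>+ l. indicator {0<..} l * (\<integral>\<^sup>+ s. ?a s * ?k s l \<partial>lborel) \<partial>lborel)"
    by (intro nn_integral_cong) (auto simp: indicator_def)
  finally show ?thesis unfolding hardy_pairing_def .
qed

lemma restricted_hardy_bound_finite_imp_hardy_bound:
  assumes C: "restricted_hardy_bound C" "1 \<le> C" and f: "antimono_on {0<..} f"
    and fin: "Lambda_q (hardy_ennreal f) < top" "w_integral f < top"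
  shows "Lambda_q (hardy_ennreal f) \<le> ennreal C * enn_powr (w_integral f) q"
proof -
  obtain P where P: "Lambda_q (hardy_ennreal f) = ennreal P" "0 \<le> P"
    using fin(1) by (cases "Lambda_q (hardy_ennreal f)" rule: ennreal_cases) auto
  obtain N where N: "w_integral f = ennreal N" "0 \<le> N"
    using fin(2) by (cases "w_integral f" rule: ennreal_cases) auto
  have key: "P \<le> N * ((q - 1) / q / e * P + C * e powr (q - 1) / q)" if e: "0 < e" for e
  proof -
    define M where "M = (q - 1) / q / e * P + C * e powr (q - 1) / q"
    have M0: "0 \<le> M" unfolding M_def using q_gt_1 P e C by auto
    have "ennreal P \<le> (\<integral>\<^sup>+ l. indicator {0<..} l * (wmass (superlevel f (ennreal l)) * ennreal M) \<partial>lborel)"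
      unfolding P(1)[symmetric] Lambda_q_hardy_layer_cake[OF f] unfolding M_def
      using P by (intro nn_integral_mono mult_left_mono hardy_pairing_le[OF C f] e initial_segment_superlevel f) auto
    also have "\<dots> = w_integral f * ennreal M"
      unfolding w_integral_layer_cake[OF f] mult.assoc[symmetric] by (rule nn_integral_multc) measurable
    finally have "ennreal P \<le> ennreal (N * M)" using N M0 by (simp add: ennreal_mult)
    then show ?thesis using N M0 unfolding M_def by (subst (asm) ennreal_le_iff) auto
  qed
  \<comment> \<open>for \<open>e = N\<close> this reads \<open>P \<le> (q - 1) / q * P + C * N powr q / q\<close>; absorb the finite \<open>P\<close>\<close>
  have "P \<le> C * N powr q"
  proof (cases "N = 0")
    case True
    then show ?thesis using key[of 1] by simp
  next
    case False
    then have N0: "0 < N" using N by auto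
    have "P \<le> N * ((q - 1) / q / N * P + C * N powr (q - 1) / q)" using key[OF N0] .
    also have "\<dots> = (q - 1) / q * P + C * N powr q / q"
      using N0 q_gt_1 powr_add[of N 1 "q - 1"] by (simp add: field_simps)
    finally show ?thesis using q_gt_1 by (simp add: field_simps)
  qed
  then show ?thesis
    using P N C(2) by (simp add: enn_powr_ennreal ennreal_mult[symmetric] del: ennreal_mult)
qed

lemma Lambda_q_SUP:
  assumes inc: "\<And>n s. G n s \<le> G (Suc n) s" and [measurable]: "\<And>n. G n \<in> borel_measurable borel"
  shows "Lambda_q (\<lambda>s. SUP n. G n s) = (SUP n. Lambda_q (G n))"
proof -
  have "Lambda_q (\<lambda>s. SUP n. G n s) = (\<integral>\<^sup>+ s. (SUP n. Wq_density s * indicator {0<..} s * enn_powr (G n s) q) \<partial>lborel)"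
    unfolding Lambda_q_eq using q_gt_1
    by (intro nn_integral_cong) (simp add: enn_powr_Sup image_image SUP_mult_left_ennreal)
  also have "\<dots> = (SUP n. Lambda_q (G n))"
    unfolding Lambda_q_eq using inc q_gt_1
    by (intro nn_integral_monotone_convergence_SUP)
      (auto simp: incseq_Suc_iff le_fun_def intro!: mult_left_mono enn_powr_mono)
  finally show ?thesis .
qed

lemma Lambda_q_hardy_bounded_finite:
  assumes C: "restricted_hardy_bound C" and g: "\<And>s. g s \<le> of_nat n * indicator {0<..<real n} s"
  shows "Lambda_q (hardy_ennreal g) < top"
proof (cases "n = 0")
  case True
  then have "hardy_ennreal g t = 0" for t
    using hardy_ennreal_mono[of g "\<lambda>_. 0" t] g by (simp add: hardy_ennreal_def)
  then show ?thesis by (simp add: Lambda_q_def)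
next
  case False
  have "Lambda_q (hardy_ennreal g) \<le> Lambda_q (hardy_ennreal (\<lambda>s. of_nat n * indicator {0<..<real n} s))"
    using g by (intro Lambda_q_mono hardy_ennreal_mono)
  also have "\<dots> = enn_powr (of_nat n) q * Lambda_q (hardy_ennreal (indicator {0<..<real n}))"
  proof -
    have [measurable]: "hardy_ennreal (indicator {0<..<real n}) \<in> borel_measurable borel"
      by (intro borel_measurable_hardy_ennreal monotone_onI) (auto simp: indicator_def)
    have "hardy_ennreal (\<lambda>s. of_nat n * indicator {0<..<real n} s) t = of_nat n * hardy_ennreal (indicator {0<..<real n}) t" for t
      by (rule hardy_ennreal_cmult) simp
    then show ?thesis
      unfolding Lambda_q_eq using q_gt_1
      by (subst nn_integral_cmult[symmetric]) (auto intro!: nn_integral_cong simp: enn_powr_mult mult_ac)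
  qed
  also have "\<dots> \<le> enn_powr (of_nat n) q * (ennreal C * enn_powr (Wfun w (real n)) q)"
    using False by (intro mult_left_mono restricted_hardy_boundD[OF C]) auto
  also have "\<dots> < top"
    using Wfun_finite[of "real n"]
    by (simp add: enn_powr_eq_top_iff ennreal_mult_eq_top_iff less_top[symmetric])
  finally show ?thesis .
qed

lemma restricted_hardy_bound_imp_hardy_bound:
  assumes C: "restricted_hardy_bound C" "1 \<le> C" and f: "antimono_on {0<..} f"
  shows "Lambda_q (hardy_ennreal f) \<le> ennreal C * enn_powr (w_integral f) q"
proof (cases "w_integral f = top")
  case False
  have [measurable]: "\<And>n. truncation n f \<in> borel_measurable borel"
    by (rule borel_measurable_truncation[OF f])
  have "Lambda_q (hardy_ennreal f) = Lambda_q (hardy_ennreal (\<lambda>s. SUP n. truncation n f s))"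
    by (intro Lambda_q_cong hardy_ennreal_cong) (simp add: SUP_truncation)
  also have "\<dots> = Lambda_q (\<lambda>s. SUP n. hardy_ennreal (truncation n f) s)"
    by (intro arg_cong[where f = Lambda_q] ext hardy_ennreal_SUP truncation_mono) measurable
  also have "\<dots> = (SUP n. Lambda_q (hardy_ennreal (truncation n f)))"
    using f by (intro Lambda_q_SUP hardy_ennreal_mono truncation_mono borel_measurable_hardy_ennreal
        antimono_on_truncation)
  also have "\<dots> \<le> ennreal C * enn_powr (w_integral f) q"
  proof (intro SUP_least)
    fix n
    have w_integral_le: "w_integral (truncation n f) \<le> w_integral f"
      unfolding w_integral_def by (intro nn_integral_mono mult_right_mono truncation_le) auto
    have "Lambda_q (hardy_ennreal (truncation n f)) \<le> ennreal C * enn_powr (w_integral (truncation n f)) q"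
      using False w_integral_le
      by (intro restricted_hardy_bound_finite_imp_hardy_bound C antimono_on_truncation f
          Lambda_q_hardy_bounded_finite[OF C(1) truncation_le_indicator])
        (auto simp: top_unique less_top)
    also have "\<dots> \<le> ennreal C * enn_powr (w_integral f) q"
      using q_gt_1 by (intro mult_left_mono enn_powr_mono w_integral_le) auto
    finally show "Lambda_q (hardy_ennreal (truncation n f)) \<le> ennreal C * enn_powr (w_integral f) q" .
  qed
  finally show ?thesis .
qed (use C in \<open>simp add: ennreal_mult_top\<close>)

end

context decreasing_weight_exponent
begin

lemma Gamma1q_norm_eq: "Gamma1q_norm w q f = enn_powr (Lambda_q (hardy_ennreal (dec_rearr f))) (1 / q)"
  unfolding Gamma1q_norm_def Lambda_q_def max_rearr_def hardy_ennreal_def ..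

lemma Lambda1_norm_eq: "Lambda1_norm w f = w_integral (dec_rearr f)"
  unfolding Lambda1_norm_def w_integral_def ..

lemma L1q_norm_eq: "L1q_norm w q g = enn_powr (Lorentz_q g) (1 / q)"
  unfolding L1q_norm_def Lorentz_q_def ..

lemma embedding_imp_restricted_hardy_bound:
  assumes C: "\<And>f::'a::euclidean_space \<Rightarrow> real. f \<in> borel_measurable lebesgue \<Longrightarrow>
    Gamma1q_norm w q f \<le> ennreal C * Lambda1_norm w f" and "0 \<le> C"
  shows "restricted_hardy_bound (C powr q)"
  unfolding restricted_hardy_bound_def
proof (intro allI impI)
  fix r :: real assume r: "0 < r"
  obtain B :: "'a set" where B: "B \<in> sets borel" "emeasure lebesgue B = ennreal r"
    using exists_borel_set_with_measure[OF r] by blast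
  have rearr: "dec_rearr (indicator B :: 'a \<Rightarrow> real) s = indicator {0<..<r} s" if "0 < s" for s
    using dec_rearr_indicator[OF B r that] .
  have "Gamma1q_norm w q (indicator B :: 'a \<Rightarrow> real) = enn_powr (Lambda_q (hardy_ennreal (indicator {0<..<r}))) (1 / q)"
    unfolding Gamma1q_norm_eq by (intro arg_cong[where f = "\<lambda>x. enn_powr x (1 / q)"] Lambda_q_cong hardy_ennreal_cong rearr)
  moreover have "Lambda1_norm w (indicator B :: 'a \<Rightarrow> real) = Wfun w r"
    unfolding Lambda1_norm_eq w_integral_def Wfun_def using rearr
    by (intro nn_integral_cong) (auto simp: indicator_def)
  moreover have "(indicator B :: 'a \<Rightarrow> real) \<in> borel_measurable lebesgue"
    using B(1) by (intro borel_measurable_indicator) auto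
  ultimately have "enn_powr (Lambda_q (hardy_ennreal (indicator {0<..<r}))) (1 / q) \<le> ennreal C * Wfun w r"
    using C[of "indicator B"] by simp
  then show "Lambda_q (hardy_ennreal (indicator {0<..<r})) \<le> ennreal (C powr q) * enn_powr (Wfun w r) q"
    using q_gt_1 \<open>0 \<le> C\<close> by (intro enn_powr_inverse_le_multD) auto
qed

lemma restricted_hardy_bound_imp_embedding:
  assumes C: "restricted_hardy_bound C" "1 \<le> C"
  shows "Gamma1q_norm w q f \<le> ennreal (C powr (1 / q)) * Lambda1_norm w f"
proof -
  have "Lambda_q (hardy_ennreal (dec_rearr f)) \<le> ennreal C * enn_powr (w_integral (dec_rearr f)) q"
    unfolding dec_rearr_def by (intro restricted_hardy_bound_imp_hardy_bound C antimono_on_rearr)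
  then show ?thesis
    unfolding Gamma1q_norm_eq Lambda1_norm_eq using C q_gt_1 by (intro enn_powr_inverse_le_multI) auto
qed

lemma Lambda1_Gamma1q_embedding_iff:
  "(\<exists>C::real. \<forall>f::'a::euclidean_space \<Rightarrow> real. f \<in> borel_measurable lebesgue \<longrightarrow>
      Gamma1q_norm w q f \<le> ennreal C * Lambda1_norm w f)
    \<longleftrightarrow> (\<exists>C. restricted_hardy_bound C)"
proof
  assume "\<exists>C::real. \<forall>f::'a::euclidean_space \<Rightarrow> real. f \<in> borel_measurable lebesgue \<longrightarrow>
      Gamma1q_norm w q f \<le> ennreal C * Lambda1_norm w f"
  then obtain C where C: "\<And>f::'a \<Rightarrow> real. f \<in> borel_measurable lebesgue \<Longrightarrow>
      Gamma1q_norm w q f \<le> ennreal C * Lambda1_norm w f"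
    by blast
  have "Gamma1q_norm w q f \<le> ennreal (max C 0) * Lambda1_norm w f"
    if "f \<in> borel_measurable lebesgue" for f :: "'a \<Rightarrow> real"
    using C[OF that] by (rule order_trans) (intro mult_right_mono ennreal_leI; simp)
  then show "\<exists>C. restricted_hardy_bound C"
    using embedding_imp_restricted_hardy_bound[of "max C 0"] by auto
next
  assume "\<exists>C. restricted_hardy_bound C"
  then obtain C where "restricted_hardy_bound C" by blast
  then have "restricted_hardy_bound (max C 1)" by (rule restricted_hardy_bound_mono) simp
  then show "\<exists>C::real. \<forall>f::'a::euclidean_space \<Rightarrow> real. f \<in> borel_measurable lebesgue \<longrightarrow>
      Gamma1q_norm w q f \<le> ennreal C * Lambda1_norm w f"
    using restricted_hardy_bound_imp_embedding[of "max C 1"] by auto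
qed

lemma hardy_L1q_bound_imp_restricted_hardy_bound:
  assumes C: "\<And>f. (\<forall>t>0. 0 \<le> f t) \<and> decreasing_on_pos f \<Longrightarrow>
      L1q_norm w q (hardy f) \<le> ennreal C * (\<integral>\<^sup>+ t \<in> {0<..}. ennreal (f t * w t) \<partial>lborel)"
    and "0 \<le> C"
  shows "restricted_hardy_bound (q * 2 powr q * C powr q)"
  unfolding restricted_hardy_bound_def
proof (intro allI impI)
  fix r :: real assume r: "0 < r"
  let ?f = "indicator {0<..<r} :: real \<Rightarrow> real"
  have "(\<forall>t>0. 0 \<le> ?f t) \<and> decreasing_on_pos ?f"
    unfolding decreasing_on_pos_def by (auto simp: indicator_def)
  moreover have "hardy ?f = hardy_ennreal (indicator {0<..<r})"
    unfolding hardy_eq by (simp add: ennreal_indicator)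
  moreover have "(\<integral>\<^sup>+ t \<in> {0<..}. ennreal (?f t * w t) \<partial>lborel) = Wfun w r"
    unfolding Wfun_def by (intro nn_integral_cong) (auto simp: indicator_def)
  ultimately have "enn_powr (Lorentz_q (hardy_ennreal (indicator {0<..<r}))) (1 / q) \<le> ennreal C * Wfun w r"
    using C[of ?f] by (simp add: L1q_norm_eq)
  then have "Lorentz_q (hardy_ennreal (indicator {0<..<r})) \<le> ennreal (C powr q) * enn_powr (Wfun w r) q"
    using q_gt_1 \<open>0 \<le> C\<close> by (intro enn_powr_inverse_le_multD) auto
  moreover have "antimono_on {0<..} (hardy_ennreal (indicator {0<..<r}))"
    by (intro hardy_ennreal_antimono monotone_onI) (auto simp: indicator_def)
  ultimately have "Lambda_q (hardy_ennreal (indicator {0<..<r}))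
      \<le> ennreal (q * 2 powr q) * (ennreal (C powr q) * enn_powr (Wfun w r) q)"
    by (intro order_trans[OF Lambda_q_le_Lorentz_q] mult_left_mono) auto
  then show "Lambda_q (hardy_ennreal (indicator {0<..<r})) \<le> ennreal (q * 2 powr q * C powr q) * enn_powr (Wfun w r) q"
    using q_gt_1 by (simp add: ennreal_mult mult.assoc)
qed

lemma restricted_hardy_bound_imp_hardy_L1q_bound:
  assumes C: "restricted_hardy_bound C" "1 \<le> C" and f: "(\<forall>t>0. 0 \<le> f t) \<and> decreasing_on_pos f"
  shows "L1q_norm w q (hardy f) \<le> ennreal ((2 powr q / q * C) powr (1 / q)) * (\<integral>\<^sup>+ t \<in> {0<..}. ennreal (f t * w t) \<partial>lborel)"
proof -
  define g where "g s = ennreal (f s)" for s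
  have g: "antimono_on {0<..} g"
    using f unfolding g_def decreasing_on_pos_def by (auto intro!: monotone_onI ennreal_leI)
  have "(\<integral>\<^sup>+ t \<in> {0<..}. ennreal (f t * w t) \<partial>lborel) = w_integral g"
    unfolding w_integral_def g_def using f w_nonneg
    by (intro nn_integral_cong) (auto simp: indicator_def ennreal_mult)
  moreover have "Lorentz_q (hardy_ennreal g) \<le> ennreal (2 powr q / q * C) * enn_powr (w_integral g) q"
  proof -
    have "Lorentz_q (hardy_ennreal g) \<le> ennreal (2 powr q / q) * (ennreal C * enn_powr (w_integral g) q)"
      by (intro order_trans[OF Lorentz_q_le_Lambda_q] hardy_ennreal_antimono g mult_left_mono
          restricted_hardy_bound_imp_hardy_bound C) auto
    also have "\<dots> = ennreal (2 powr q / q * C) * enn_powr (w_integral g) q"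
      using q_gt_1 C(2) by (simp add: ennreal_mult[symmetric] mult.assoc[symmetric] del: ennreal_mult)
    finally show ?thesis .
  qed
  ultimately show ?thesis
    unfolding L1q_norm_eq hardy_eq g_def[symmetric] using q_gt_1 C(2)
    by (intro enn_powr_inverse_le_multI) auto
qed

lemma hardy_L1q_bound_iff:
  "(\<exists>C::real. \<forall>f::real \<Rightarrow> real. (\<forall>t>0. 0 \<le> f t) \<and> decreasing_on_pos f \<longrightarrow>
      L1q_norm w q (hardy f) \<le> ennreal C * (\<integral>\<^sup>+ t \<in> {0<..}. ennreal (f t * w t) \<partial>lborel))
    \<longleftrightarrow> (\<exists>C. restricted_hardy_bound C)"
proof
  assume "\<exists>C::real. \<forall>f::real \<Rightarrow> real. (\<forall>t>0. 0 \<le> f t) \<and> decreasing_on_pos f \<longrightarrow>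
      L1q_norm w q (hardy f) \<le> ennreal C * (\<integral>\<^sup>+ t \<in> {0<..}. ennreal (f t * w t) \<partial>lborel)"
  then obtain C where C: "\<And>f. (\<forall>t>0. 0 \<le> f t) \<and> decreasing_on_pos f \<Longrightarrow>
      L1q_norm w q (hardy f) \<le> ennreal C * (\<integral>\<^sup>+ t \<in> {0<..}. ennreal (f t * w t) \<partial>lborel)"
    by blast
  have "L1q_norm w q (hardy f) \<le> ennreal (max C 0) * (\<integral>\<^sup>+ t \<in> {0<..}. ennreal (f t * w t) \<partial>lborel)"
    if "(\<forall>t>0. 0 \<le> f t) \<and> decreasing_on_pos f" for f
    using C[OF that] by (rule order_trans) (intro mult_right_mono ennreal_leI; simp)
  then show "\<exists>C. restricted_hardy_bound C"
    using hardy_L1q_bound_imp_restricted_hardy_bound[of "max C 0"] by auto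
next
  assume "\<exists>C. restricted_hardy_bound C"
  then obtain C where "restricted_hardy_bound C" by blast
  then have "restricted_hardy_bound (max C 1)" by (rule restricted_hardy_bound_mono) simp
  then show "\<exists>C::real. \<forall>f::real \<Rightarrow> real. (\<forall>t>0. 0 \<le> f t) \<and> decreasing_on_pos f \<longrightarrow>
      L1q_norm w q (hardy f) \<le> ennreal C * (\<integral>\<^sup>+ t \<in> {0<..}. ennreal (f t * w t) \<partial>lborel)"
    using restricted_hardy_bound_imp_hardy_L1q_bound[of "max C 1"] by auto
qed

lemma B1_iff_restricted_hardy_bound: "B1 w \<longleftrightarrow> (\<exists>C. restricted_hardy_bound C)"
  using B1_imp_restricted_hardy_bound restricted_hardy_bound_imp_B1 by metis

end

theorem theorem3p4:
  fixes w :: "real \<Rightarrow> real" and q :: real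
  assumes "weight w" and "decreasing_on_pos w" and "1 < q"
  shows "((\<exists>C::real. \<forall>f::'a::euclidean_space \<Rightarrow> real. f \<in> borel_measurable lebesgue \<longrightarrow>
              Gamma1q_norm w q f \<le> ennreal C * Lambda1_norm w f)
          \<longleftrightarrow> (\<exists>C::real. \<forall>f::real \<Rightarrow> real. (\<forall>t>0. 0 \<le> f t) \<and> decreasing_on_pos f \<longrightarrow>
              L1q_norm w q (hardy f) \<le> ennreal C * (\<integral>\<^sup>+ t \<in> {0<..}. ennreal (f t * w t) \<partial>lborel)))
       \<and> ((\<exists>C::real. \<forall>f::real \<Rightarrow> real. (\<forall>t>0. 0 \<le> f t) \<and> decreasing_on_pos f \<longrightarrow>
              L1q_norm w q (hardy f) \<le> ennreal C * (\<integral>\<^sup>+ t \<in> {0<..}. ennreal (f t * w t) \<partial>lborel))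
          \<longleftrightarrow> B1 w)"
proof -
  interpret decreasing_weight_exponent w q
    using assms by unfold_locales
  show ?thesis
    using Lambda1_Gamma1q_embedding_iff hardy_L1q_bound_iff B1_iff_restricted_hardy_bound by blast
qed

end
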